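(* Under the hypotheses and notation of the context, the limit $\bar\Psi(+\infty)=\lim_{t\to+\infty}\bar\Psi(t)$ exists and $$\bar\Psi(+\infty)\in\Big\{0,\ -\tfrac{p-1}{2(p+1)}(k^2+l^2)\sigma_0^{\frac{p+1}{p-1}}\Big\},$$ where $k,l\ge0$ are not both $0$ and satisfy $\mu_1k^{2q}+\beta k^{q-1}l^{q+1}=1$, $\mu_2l^{2q}+\beta l^{q-1}k^{q+1}=1$ (if one of $k,l$ is $0$, say $k=0$, this is understood as $\mu_2l^{2q}=1$, and symmetrically).
   Context: Let $n\ge3$, $\mu_1,\mu_2,\beta>0$, $p=2q+1$ with $\frac{n}{n-2}<p<\frac{n+2}{n-2}$, and $(u,v)$ a nonnegative radial $C^2(\mathbb{R}^n\setminus\{0\})$ solution of $-\Delta u=\mu_1u^{2q+1}+\beta u^qv^{q+1}$, $-\Delta v=\mu_2v^{2q+1}+\beta v^qu^{q+1}$ in $\mathbb{R}^n\setminus\{0\}$. $\bar u(x)=|x|^{2-n}u(x/|x|^2)$, $\bar v(x)=|x|^{2-n}v(x/|x|^2)$, $\alpha=p(n-2)-(n+2)$, $\delta_0=\frac{2+\alpha}{p-1}$, $\bar w_1(t)=e^{-\delta_0t}\bar u(e^{-t})$, $\bar w_2(t)=e^{-\delta_0t}\bar v(e^{-t})$, $\sigma_0=\frac{(2+\alpha)(n-2)}{(p-1)^2}\big(p-\frac{n+\alpha}{n-2}\big)$, and $$\bar\Psi(t)=\tfrac12\big(|\bar w_1'|^2+|\bar w_2'|^2-\sigma_0(\bar w_1^2+\bar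 w_2^2)\big)+\tfrac1{p+1}\big(\mu_1\bar w_1^{p+1}+2\beta\bar w_1^{q+1}\bar w_2^{q+1}+\mu_2\bar w_2^{p+1}\big).$$ *)

theory Defs
  imports "HOL-Analysis.Analysis"
begin

definition partial :: "'n::finite \<Rightarrow> (real^'n \<Rightarrow> real) \<Rightarrow> real^'n \<Rightarrow> real" where
  "partial i f x = deriv (\<lambda>t. f (x + t *\<^sub>R axis i 1)) 0"

definition partial_exists :: "'n::finite \<Rightarrow> (real^'n \<Rightarrow> real) \<Rightarrow> real^'n \<Rightarrow> bool" where
  "partial_exists i f x \<longleftrightarrow> (\<lambda>t. f (x + t *\<^sub>R axis i 1)) differentiable (at 0)"

definition C2_on :: "(real^'n::finite) set \<Rightarrow> (real^'n \<Rightarrow> real) \<Rightarrow> bool" where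
  "C2_on S f \<longleftrightarrow> continuous_on S f \<and>
     (\<forall>i. (\<forall>x\<in>S. partial_exists i f x) \<and> continuous_on S (partial i f)) \<and>
     (\<forall>i j. (\<forall>x\<in>S. partial_exists j (partial i f) x) \<and>
            continuous_on S (partial j (partial i f)))"

definition laplacian :: "(real^'n::finite \<Rightarrow> real) \<Rightarrow> real^'n \<Rightarrow> real" where
  "laplacian f x = (\<Sum>i\<in>UNIV. partial i (partial i f) x)"

definition radial :: "(real^'n::finite \<Rightarrow> real) \<Rightarrow> bool" where
  "radial f \<longleftrightarrow> (\<exists>U. \<forall>x. x \<noteq> 0 \<longrightarrow> f x = U (norm x))"

definition kelvin :: "(real^'n::finite \<Rightarrow> real) \<Rightarrow> real^'n \<Rightarrow> real" where
  "kelvin f x = norm x powr (2 - real CARD('n)) * f ((1 / (norm x)\<^sup>2) *\<^sub>R x)"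

text \<open>A fixed unit vector; the radial function ubar(r) means ubar at any point of norm r.\<close>
definition unitv :: "real^'n::finite" where
  "unitv = axis (SOME i. True) 1"

definition wbar :: "real \<Rightarrow> (real^'n::finite \<Rightarrow> real) \<Rightarrow> real \<Rightarrow> real" where
  "wbar \<delta>\<^sub>0 f t = exp (- \<delta>\<^sub>0 * t) * kelvin f (exp (- t) *\<^sub>R (unitv :: real^'n))"

end

theory Submission
  imports Defs
begin

text \<open>With \<open>m = 2 / (p - 1)\<close>, the Kelvin and Emden--Fowler transforms turn a radial solution into an
  autonomous system \<open>w\<^sub>i'' = b w\<^sub>i' + \<sigma>\<^sub>0 w\<^sub>i - \<partial>\<^sub>iF(w\<^sub>1, w\<^sub>2)\<close> with anti-damping \<open>b = 2m - (n - 2) > 0\<close>,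
  for which \<open>\<Psi>\<close> is an energy: \<open>\<Psi>' = b (w\<^sub>1'\<^sup>2 + w\<^sub>2'\<^sup>2) \<ge> 0\<close>. The sum \<open>z = w\<^sub>1 + w\<^sub>2\<close> satisfies
  \<open>z'' \<le> b z' + \<sigma>\<^sub>0 z - c z\<^sup>p\<close>, and this inequality keeps \<open>z\<close> bounded: a critical point at a high level starts
  a descent that anti-damping can never stop, while a large increasing \<open>z\<close> would have to grow faster
  than anti-damping allows. Anti-damping then also bounds \<open>w\<^sub>i'\<close> and \<open>w\<^sub>i''\<close>. So \<open>\<Psi>\<close> increases to a finite
  limit, its dissipation forces \<open>w\<^sub>i' \<rightarrow> 0\<close>, and every \<open>\<omega>\<close>-limit point \<open>(a\<^sub>1, a\<^sub>2)\<close> is an equilibrium,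
  whose energy \<open>-(p - 1) \<sigma>\<^sub>0 (a\<^sub>1\<^sup>2 + a\<^sub>2\<^sup>2) / (2 (p + 1))\<close> becomes the stated value after scaling
  \<open>(a\<^sub>1, a\<^sub>2)\<close> by \<open>\<sigma>\<^sub>0\<^sup>-\<^sup>1\<^sup>/\<^sup>(\<^sup>p\<^sup>-\<^sup>1\<^sup>)\<close>.\<close>

lemma DERIV_powr_of_nonneg:
  fixes f :: "real \<Rightarrow> real"
  assumes r: "r > 1" and nonneg: "\<And>y. f y \<ge> 0" and f': "DERIV f x :> f'"
  shows "DERIV (\<lambda>y. f y powr r) x :> r * f x powr (r - 1) * f'"
proof (cases "f x = 0")
  case False
  then have "f x > 0" using nonneg[of x] by auto
  from DERIV_fun_powr[OF f' this, of r] show ?thesis by simp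
next
  case True
  \<comment> \<open>At a zero of \<open>f\<close>, write \<open>f\<^sup>r = f \<cdot> f\<^sup>r\<^sup>-\<^sup>1\<close> and use Carath\'eodory's form of the derivative.\<close>
  from f' obtain g where g: "\<And>z. f z - f x = g z * (z - x)" "isCont g x" "g x = f'"
    using CARAT_DERIV by blast
  have "isCont f x" using f' by (rule DERIV_isCont)
  then have cont: "isCont (\<lambda>y. f y powr (r - 1)) x"
    unfolding continuous_at by (rule tendsto_powr') (use r nonneg in auto)
  have "DERIV (\<lambda>y. f y powr r) x :> g x * f x powr (r - 1)"
    unfolding CARAT_DERIV
  proof (intro exI conjI allI)
    fix z
    have "f z powr r = f z * f z powr (r - 1)"
      using powr_mult_base[OF nonneg[of z], of "r - 1"] by simp
    then show "f z powr r - f x powr r = (g z * f z powr (r - 1)) * (z - x)"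
      using g(1)[of z] True by simp
    show "isCont (\<lambda>z. g z * f z powr (r - 1)) x" using g(2) cont by (rule isCont_mult)
  qed simp
  then show ?thesis using True g r by simp
qed

lemma DERIV_square:
  fixes f :: "real \<Rightarrow> real"
  shows "DERIV f x :> f' \<Longrightarrow> DERIV (\<lambda>y. (f y)\<^sup>2) x :> 2 * f x * f'"
  by (auto intro!: derivative_eq_intros)

lemma powr_ge_if_root_le:
  fixes p X y :: real
  assumes "p > 1" "X \<ge> 0" "X powr (1 / (p - 1)) \<le> y"
  shows "X \<le> y powr (p - 1)"
proof -
  have "(X powr (1 / (p - 1))) powr (p - 1) \<le> y powr (p - 1)"
    using assms by (intro powr_mono2) auto
  then show ?thesis using assms by (simp add: powr_powr)
qed

lemma tendsto_powr_of_nonneg: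
  fixes f :: "'a \<Rightarrow> real"
  assumes "(f \<longlongrightarrow> a) F" "\<And>x. f x \<ge> 0" "e > 0"
  shows "((\<lambda>x. f x powr e) \<longlongrightarrow> a powr e) F"
  using assms by (intro tendsto_powr2 tendsto_const) auto

lemma nondecreasing_bounded_tendsto:
  fixes f :: "real \<Rightarrow> real"
  assumes mono: "\<And>x y. a \<le> x \<Longrightarrow> x \<le> y \<Longrightarrow> f x \<le> f y" and bdd: "\<And>x. a \<le> x \<Longrightarrow> f x \<le> M"
  shows "(f \<longlongrightarrow> (SUP x\<in>{a..}. f x)) at_top"
proof (rule increasing_tendsto)
  have bdd': "bdd_above (f ` {a..})" using bdd by (intro bdd_aboveI[of _ M]) auto
  show "\<forall>\<^sub>F t in at_top. f t \<le> (SUP x\<in>{a..}. f x)"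
    using eventually_ge_at_top[of a] by eventually_elim (auto intro: cSUP_upper[OF _ bdd'])
  fix y assume "y < (SUP x\<in>{a..}. f x)"
  then obtain x where x: "a \<le> x" "y < f x" using less_cSUP_iff[OF _ bdd'] by auto
  show "\<forall>\<^sub>F t in at_top. y < f t"
    using eventually_ge_at_top[of x] by eventually_elim (use mono x in fastforce)
qed

lemma DERIV_ge_pos_imp_unbounded:
  fixes w w' :: "real \<Rightarrow> real"
  assumes w': "\<And>t. DERIV w t :> w' t" and \<delta>: "\<delta> > 0" and ge: "\<And>t. t \<ge> t\<^sub>0 \<Longrightarrow> w' t \<ge> \<delta>"
  shows "\<exists>t\<ge>t\<^sub>0. w t > M"
proof -
  define t where "t = t\<^sub>0 + (\<bar>M\<bar> + \<bar>w t\<^sub>0\<bar> + 1) / \<delta>"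
  have "t\<^sub>0 \<le> t" using \<delta> by (simp add: t_def)
  have "w t\<^sub>0 - \<delta> * t\<^sub>0 \<le> w t - \<delta> * t"
    using \<open>t\<^sub>0 \<le> t\<close>
  proof (rule DERIV_nonneg_imp_nondecreasing)
    fix x assume "t\<^sub>0 \<le> x"
    moreover have "DERIV (\<lambda>t. w t - \<delta> * t) x :> w' x - \<delta>"
      by (auto intro!: derivative_eq_intros w')
    ultimately show "\<exists>y. DERIV (\<lambda>t. w t - \<delta> * t) x :> y \<and> y \<ge> 0"
      using ge[of x] by auto
  qed
  moreover have "\<delta> * (t - t\<^sub>0) = \<bar>M\<bar> + \<bar>w t\<^sub>0\<bar> + 1" using \<delta> by (simp add: t_def)
  ultimately show ?thesis using \<open>t\<^sub>0 \<le> t\<close> by (intro exI[of _ t]) (auto simp: algebra_simps)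
qed

lemma DERIV_le_mult_imp_exp_bound:
  fixes f f' :: "real \<Rightarrow> real"
  assumes f': "\<And>x. a \<le> x \<Longrightarrow> DERIV f x :> f' x" and le: "\<And>x. a \<le> x \<Longrightarrow> f' x \<le> k * f x"
    and "a \<le> t"
  shows "f t \<le> exp (k * (t - a)) * f a"
proof -
  have decay: "exp (- k * t) * f t \<le> exp (- k * a) * f a"
    using \<open>a \<le> t\<close>
  proof (rule DERIV_nonpos_imp_nonincreasing)
    fix x assume "a \<le> x"
    then have "DERIV (\<lambda>x. exp (- k * x) * f x) x :> exp (- k * x) * (f' x - k * f x)"
      by (auto intro!: derivative_eq_intros f' simp: algebra_simps)
    moreover have "exp (- k * x) * (f' x - k * f x) \<le> 0"
      using le[OF \<open>a \<le> x\<close>] by (simp add: mult_nonneg_nonpos)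
    ultimately show "\<exists>y. DERIV (\<lambda>x. exp (- k * x) * f x) x :> y \<and> y \<le> 0" by blast
  qed
  have "f t = exp (k * t) * (exp (- k * t) * f t)"
    by (simp add: mult.assoc[symmetric] exp_minus_inverse)
  also have "\<dots> \<le> exp (k * t) * (exp (- k * a) * f a)"
    using decay by simp
  also have "\<dots> = exp (k * (t - a)) * f a"
    by (simp add: mult.assoc[symmetric] mult_exp_exp right_diff_distrib)
  finally show ?thesis .
qed

lemma exp_growth_exceeds:
  fixes b X a :: real
  assumes "b > 0"
  shows "\<exists>t\<ge>a. X \<le> exp (b * (t - a))"
proof (intro exI conjI)
  show "a \<le> a + \<bar>X\<bar> / b" using assms by simp
  have "X \<le> 1 + \<bar>X\<bar>" by simp
  also have "\<dots> \<le> exp \<bar>X\<bar>" by (rule exp_ge_add_one_self)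
  finally show "X \<le> exp (b * (a + \<bar>X\<bar> / b - a))" using assms by simp
qed

lemma first_nonneg_point:
  fixes f :: "real \<Rightarrow> real"
  assumes cont: "continuous_on UNIV f" and "f a < 0" "a \<le> T" "f T \<ge> 0"
  shows "\<exists>T\<^sub>0. a < T\<^sub>0 \<and> f T\<^sub>0 = 0 \<and> (\<forall>x. a \<le> x \<longrightarrow> x < T\<^sub>0 \<longrightarrow> f x < 0)"
proof -
  define S where "S = {t. a \<le> t \<and> 0 \<le> f t}"
  have "S \<noteq> {}" "bdd_below S" using assms by (auto simp: S_def intro!: bdd_belowI[of _ a])
  moreover have "closed S"
    unfolding S_def by (intro closed_Collect_conj closed_Collect_le continuous_on_const continuous_on_id cont)
  ultimately have T\<^sub>0: "Inf S \<in> S" by (rule closed_contains_Inf)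
  have below: "f x < 0" if "a \<le> x" "x < Inf S" for x
    using cInf_lower[of x S] \<open>bdd_below S\<close> that by (force simp: S_def)
  have "f (Inf S) = 0"
  proof (rule ccontr)
    assume "f (Inf S) \<noteq> 0"
    moreover have "continuous_on {a..Inf S} f" using cont by (rule continuous_on_subset) simp
    ultimately obtain x where "a \<le> x" "x \<le> Inf S" "f x = 0"
      using IVT'[of f a 0 "Inf S"] T\<^sub>0 \<open>f a < 0\<close> by (auto simp: S_def)
    then show False using below[of x] \<open>f (Inf S) \<noteq> 0\<close> by (cases "x = Inf S") auto
  qed
  moreover have "a < Inf S" using T\<^sub>0 \<open>f a < 0\<close> by (cases "Inf S = a") (auto simp: S_def)
  ultimately show ?thesis using below by blast
qed

section \<open>The inequality \<open>z'' \<le> b z' + \<sigma> z - c z\<^sup>p\<close>\<close>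

locale superlinear_ode_ineq =
  fixes z z' z'' :: "real \<Rightarrow> real" and b \<sigma> c p :: real
  assumes b_pos: "b > 0" and \<sigma>_pos: "\<sigma> > 0" and c_pos: "c > 0" and p_gt_1: "p > 1"
    and nonneg: "\<And>t. z t \<ge> 0"
    and deriv: "\<And>t. DERIV z t :> z' t" and deriv2: "\<And>t. DERIV z' t :> z'' t"
    and ineq: "\<And>t. z'' t \<le> b * z' t + \<sigma> * z t - c * z t powr p"
begin

definition potential :: "real \<Rightarrow> real" where
  "potential y = \<sigma> * y\<^sup>2 / 2 - c * y powr (p + 1) / (p + 1)"

lemma potential_gap:
  assumes "0 \<le> y" "y \<le> H"
  shows "(H\<^sup>2 - y\<^sup>2) * (c * H powr (p - 1) / (p + 1) - \<sigma> / 2) \<le> potential y - potential H"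
proof -
  have split: "x powr (p + 1) = x powr (p - 1) * x\<^sup>2" if "x \<ge> 0" for x :: real
  proof -
    have "x powr (p + 1) = x powr (p - 1) * x powr 2" by (simp add: powr_add[symmetric] add.commute)
    then show ?thesis using that by simp
  qed
  have "y powr (p - 1) * y\<^sup>2 \<le> H powr (p - 1) * y\<^sup>2"
    using assms p_gt_1 by (intro mult_right_mono powr_mono2) auto
  then have "c * (H powr (p - 1) * (H\<^sup>2 - y\<^sup>2)) \<le> c * (H powr (p + 1) - y powr (p + 1))"
    using assms c_pos split[of y] split[of H] by (intro mult_left_mono) (auto simp: algebra_simps)
  then have "c * (H powr (p - 1) * (H\<^sup>2 - y\<^sup>2)) / (p + 1) \<le> c * (H powr (p + 1) - y powr (p + 1)) / (p + 1)"
    using p_gt_1 by (intro divide_right_mono) auto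
  moreover have "potential y - potential H = \<sigma> * (y\<^sup>2 - H\<^sup>2) / 2 + c * (H powr (p + 1) - y powr (p + 1)) / (p + 1)"
    by (simp add: potential_def algebra_simps diff_divide_distrib)
  moreover have "(H\<^sup>2 - y\<^sup>2) * (c * H powr (p - 1) / (p + 1) - \<sigma> / 2)
      = c * (H powr (p - 1) * (H\<^sup>2 - y\<^sup>2)) / (p + 1) + \<sigma> * (y\<^sup>2 - H\<^sup>2) / 2"
    by (simp add: algebra_simps diff_divide_distrib)
  ultimately show ?thesis by linarith
qed

lemma continuous_on_z: "continuous_on S z"
  using deriv by (meson DERIV_isCont continuous_at_imp_continuous_on)

lemma continuous_on_z': "continuous_on S z'"
  using deriv2 by (meson DERIV_isCont continuous_at_imp_continuous_on)

lemma antimono_on_descent: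
  assumes "a \<le> t" "\<And>x. a \<le> x \<Longrightarrow> x \<le> t \<Longrightarrow> z' x \<le> 0"
  shows "z t \<le> z a"
  using assms(1) by (rule DERIV_nonpos_imp_nonincreasing) (use deriv assms(2) in blast)

text \<open>While \<open>z\<close> decreases, the anti-damping \<open>b z'\<close> can only increase the mechanical energy.\<close>

lemma energy_mono_on_descent:
  assumes "s \<le> t" and descent: "\<And>x. s \<le> x \<Longrightarrow> x \<le> t \<Longrightarrow> z' x \<le> 0"
  shows "(z' s)\<^sup>2 / 2 - potential (z s) \<le> (z' t)\<^sup>2 / 2 - potential (z t)"
  using \<open>s \<le> t\<close>
proof (rule DERIV_nonneg_imp_nondecreasing)
  fix x assume x: "s \<le> x" "x \<le> t"
  have "DERIV (\<lambda>t. z t powr (p + 1)) x :> (p + 1) * z x powr p * z' x"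
    using DERIV_powr_of_nonneg[of "p + 1" z, OF _ nonneg deriv] p_gt_1 by simp
  then have "DERIV (\<lambda>t. (z' t)\<^sup>2 / 2 - potential (z t)) x
      :> (2 * z' x * z'' x) / 2 - (\<sigma> * (2 * z x * z' x) / 2 - c * ((p + 1) * z x powr p * z' x) / (p + 1))"
    unfolding potential_def
    by (intro DERIV_diff DERIV_cdivide DERIV_cmult DERIV_square[OF deriv2] DERIV_square[OF deriv])
  moreover have "(2 * z' x * z'' x) / 2 - (\<sigma> * (2 * z x * z' x) / 2 - c * ((p + 1) * z x powr p * z' x) / (p + 1))
      = z' x * (z'' x - \<sigma> * z x + c * z x powr p)"
    using p_gt_1 by (simp add: field_simps)
  ultimately have "DERIV (\<lambda>t. (z' t)\<^sup>2 / 2 - potential (z t)) x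
      :> z' x * (z'' x - \<sigma> * z x + c * z x powr p)"
    by (simp only:)
  moreover have "z' x * (b * z' x) \<le> z' x * (z'' x - \<sigma> * z x + c * z x powr p)"
    using ineq[of x] descent[OF x] by (intro mult_left_mono_neg) auto
  moreover have "0 \<le> z' x * (b * z' x)"
    using b_pos by (simp add: mult.left_commute[of "z' x"])
  ultimately show "\<exists>y. DERIV (\<lambda>t. (z' t)\<^sup>2 / 2 - potential (z t)) x :> y \<and> y \<ge> 0"
    by force
qed

lemma descent_speed:
  assumes "z' s = 0" "s \<le> t" "\<And>x. s \<le> x \<Longrightarrow> x \<le> t \<Longrightarrow> z' x \<le> 0"
  shows "((z s)\<^sup>2 - (z t)\<^sup>2) * (c * z s powr (p - 1) / (p + 1) - \<sigma> / 2) \<le> (z' t)\<^sup>2 / 2"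
proof -
  have "z t \<le> z s" using antimono_on_descent assms(2,3) by blast
  then have "((z s)\<^sup>2 - (z t)\<^sup>2) * (c * z s powr (p - 1) / (p + 1) - \<sigma> / 2)
      \<le> potential (z t) - potential (z s)"
    by (intro potential_gap nonneg)
  moreover have "- potential (z s) \<le> (z' t)\<^sup>2 / 2 - potential (z t)"
    using energy_mono_on_descent[OF assms(2,3)] assms(1) by simp
  ultimately show ?thesis by linarith
qed

lemma descent_starts:
  assumes "z' s = 0" "z'' s < 0"
  shows "\<exists>s\<^sub>1>s. z' s\<^sub>1 < 0 \<and> z s\<^sub>1 < z s \<and> (\<forall>x. s \<le> x \<and> x \<le> s\<^sub>1 \<longrightarrow> z' x \<le> 0)"
proof -
  obtain d where "d > 0" and d: "\<And>h. 0 < h \<Longrightarrow> h < d \<Longrightarrow> z' (s + h) < 0"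
    using DERIV_neg_dec_right[OF deriv2] assms by metis
  define s\<^sub>1 where "s\<^sub>1 = s + d / 2"
  have "s < s\<^sub>1" "z' s\<^sub>1 < 0" using \<open>d > 0\<close> d[of "d / 2"] by (auto simp: s\<^sub>1_def)
  have descent: "z' x \<le> 0" if "s \<le> x" "x \<le> s\<^sub>1" for x
    using assms(1) d[of "x - s"] that \<open>d > 0\<close> by (cases "x = s") (auto simp: s\<^sub>1_def)
  have "z s\<^sub>1 < z s"
  proof -
    obtain \<xi> where "s < \<xi>" "\<xi> < s\<^sub>1" "z s\<^sub>1 - z s = (s\<^sub>1 - s) * z' \<xi>"
      using MVT2[OF \<open>s < s\<^sub>1\<close>] deriv by blast
    moreover have "z' \<xi> < 0" using d[of "\<xi> - s"] \<open>s < \<xi>\<close> \<open>\<xi> < s\<^sub>1\<close> by (simp add: s\<^sub>1_def)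
    then have "(s\<^sub>1 - s) * z' \<xi> < 0" using \<open>s < s\<^sub>1\<close> by (simp add: mult_pos_neg)
    ultimately show ?thesis by simp
  qed
  then show ?thesis using \<open>s < s\<^sub>1\<close> \<open>z' s\<^sub>1 < 0\<close> descent by blast
qed

text \<open>Once started from a critical point with positive margin, a descent can never stop: at a first
  zero \<open>T\<close> of \<open>z'\<close>, the speed bound would give \<open>0 = z' T\<^sup>2 > 0\<close>.\<close>

lemma descent_persists:
  assumes crit: "z' s = 0" and margin: "c * z s powr (p - 1) / (p + 1) - \<sigma> / 2 > 0"
    and "s < s\<^sub>1" "z' s\<^sub>1 < 0" "z s\<^sub>1 < z s" and descent: "\<And>x. s \<le> x \<Longrightarrow> x \<le> s\<^sub>1 \<Longrightarrow> z' x \<le> 0"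
    and "s\<^sub>1 \<le> t"
  shows "z' t < 0"
proof (rule ccontr)
  assume "\<not> z' t < 0"
  with continuous_on_z' obtain T where "s\<^sub>1 < T" "z' T = 0" and neg: "\<And>x. s\<^sub>1 \<le> x \<Longrightarrow> x < T \<Longrightarrow> z' x < 0"
    using first_nonneg_point[of z' s\<^sub>1 t] \<open>z' s\<^sub>1 < 0\<close> \<open>s\<^sub>1 \<le> t\<close> by (force simp: not_less)
  have descent_T: "z' x \<le> 0" if "s \<le> x" "x \<le> T" for x
    using descent[of x] neg[of x] \<open>z' T = 0\<close> that by (cases "x \<le> s\<^sub>1"; cases "x = T") auto
  then have "z T \<le> z s\<^sub>1" using antimono_on_descent[of s\<^sub>1 T] \<open>s < s\<^sub>1\<close> \<open>s\<^sub>1 < T\<close> by force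
  then have "(z T)\<^sup>2 < (z s)\<^sup>2" using \<open>z s\<^sub>1 < z s\<close> nonneg[of T] by (simp add: power_strict_mono)
  with margin have "0 < ((z s)\<^sup>2 - (z T)\<^sup>2) * (c * z s powr (p - 1) / (p + 1) - \<sigma> / 2)" by simp
  also have "\<dots> \<le> (z' T)\<^sup>2 / 2"
    using descent_speed[OF crit] descent_T \<open>s < s\<^sub>1\<close> \<open>s\<^sub>1 < T\<close> by simp
  finally show False using \<open>z' T = 0\<close> by simp
qed

text \<open>Hence the descent has speed at least \<open>v > 0\<close> after \<open>s\<^sub>1\<close>, and \<open>z\<close> would become negative.\<close>

lemma critical_value_bound:
  assumes crit: "z' s = 0"
  shows "c * z s powr (p - 1) < \<sigma> * (p + 1)"
proof (rule ccontr)
  assume "\<not> ?thesis"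
  then have big: "\<sigma> * (p + 1) \<le> c * z s powr (p - 1)" by simp
  define \<kappa> where "\<kappa> = c * z s powr (p - 1) / (p + 1) - \<sigma> / 2"
  have "0 < \<sigma> * p" using \<sigma>_pos p_gt_1 by simp
  then have "\<sigma> < c * z s powr (p - 1)" "\<sigma> \<le> c * z s powr (p - 1) / (p + 1)"
    using big p_gt_1 by (auto simp: field_simps)
  then have \<kappa>: "\<kappa> > 0" using \<sigma>_pos unfolding \<kappa>_def by linarith
  have "z s \<noteq> 0" using \<open>\<sigma> < c * z s powr (p - 1)\<close> \<sigma>_pos by auto
  then have "z s > 0" using nonneg[of s] by simp
  then have "z s * \<sigma> < z s * (c * z s powr (p - 1))" using \<open>\<sigma> < c * z s powr (p - 1)\<close> by simp
  moreover have "z s powr p = z s * z s powr (p - 1)"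
    using powr_mult_base[of "z s" "p - 1"] \<open>z s > 0\<close> by simp
  ultimately have "z'' s < 0" using ineq[of s] crit by (simp add: algebra_simps)
  then obtain s\<^sub>1 where s\<^sub>1: "s < s\<^sub>1" "z' s\<^sub>1 < 0" "z s\<^sub>1 < z s"
    and "\<forall>x. s \<le> x \<and> x \<le> s\<^sub>1 \<longrightarrow> z' x \<le> 0"
    using descent_starts[OF crit] by blast
  then have descent\<^sub>1: "z' x \<le> 0" if "s \<le> x" "x \<le> s\<^sub>1" for x using that by blast
  have descent: "z' t < 0" if "s\<^sub>1 \<le> t" for t
    by (rule descent_persists[OF crit \<kappa>[unfolded \<kappa>_def] s\<^sub>1]) (use descent\<^sub>1 that in auto)
  define D where "D = ((z s)\<^sup>2 - (z s\<^sub>1)\<^sup>2) * \<kappa>"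
  have "D > 0" unfolding D_def using \<kappa> s\<^sub>1 nonneg[of s\<^sub>1] by (simp add: power_strict_mono)
  have "sqrt (2 * D) \<le> - z' t" if "s\<^sub>1 \<le> t" for t
  proof -
    have descent_t: "z' x \<le> 0" if "s \<le> x" "x \<le> t" for x
      using descent\<^sub>1[of x] descent[of x] that by (cases "x \<le> s\<^sub>1") auto
    then have "z t \<le> z s\<^sub>1" using antimono_on_descent[of s\<^sub>1 t] \<open>s < s\<^sub>1\<close> that by force
    then have "(z t)\<^sup>2 \<le> (z s\<^sub>1)\<^sup>2" using nonneg[of t] by (simp add: power_mono)
    then have "D \<le> ((z s)\<^sup>2 - (z t)\<^sup>2) * \<kappa>" unfolding D_def using \<kappa> by (intro mult_right_mono) auto
    also have "\<dots> \<le> (z' t)\<^sup>2 / 2"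
      unfolding \<kappa>_def using descent_speed[OF crit] descent_t \<open>s < s\<^sub>1\<close> that by simp
    finally have "sqrt (2 * D) \<le> sqrt ((z' t)\<^sup>2)" by (intro real_sqrt_le_mono) simp
    then show ?thesis using descent[OF that] by simp
  qed
  then obtain t where "- z t > 0"
    using DERIV_ge_pos_imp_unbounded[of "\<lambda>t. - z t" "\<lambda>t. - z' t" "sqrt (2 * D)" s\<^sub>1 0]
      deriv \<open>D > 0\<close> by (auto intro: DERIV_minus)
  then show False using nonneg[of t] by simp
qed

lemma critical_value_less_root:
  assumes "z' s = 0"
  shows "z s < (\<sigma> * (p + 1) / c) powr (1 / (p - 1))"
proof (rule ccontr)
  assume "\<not> ?thesis"
  then have "\<sigma> * (p + 1) / c \<le> z s powr (p - 1)"
    using \<sigma>_pos c_pos p_gt_1 by (intro powr_ge_if_root_le) auto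
  then show False using critical_value_bound[OF assms] c_pos by (simp add: field_simps)
qed

lemma max_at_right_end:
  assumes crit: "\<And>s. z' s = 0 \<Longrightarrow> z s < K" and "z t\<^sub>0 \<le> K" "t\<^sub>0 \<le> a" "K < z a" "a \<le> t"
    and "x \<in> {t\<^sub>0..t}"
  shows "z x \<le> z t"
proof -
  obtain s where s: "s \<in> {t\<^sub>0..t}" and max: "\<And>y. y \<in> {t\<^sub>0..t} \<Longrightarrow> z y \<le> z s"
    using continuous_attains_sup[of "{t\<^sub>0..t}" z] continuous_on_z assms(3,5) by fastforce
  have "K < z s" using max[of a] assms by auto
  have "s = t"
  proof (rule ccontr)
    assume "s \<noteq> t"
    moreover have "s \<noteq> t\<^sub>0" using \<open>K < z s\<close> \<open>z t\<^sub>0 \<le> K\<close> by auto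
    ultimately have "t\<^sub>0 < s" "s < t" using s by auto
    then have "z' s = 0"
    proof (intro DERIV_local_max[OF deriv])
      show "0 < min (s - t\<^sub>0) (t - s)" using \<open>t\<^sub>0 < s\<close> \<open>s < t\<close> by simp
      show "\<forall>y. \<bar>s - y\<bar> < min (s - t\<^sub>0) (t - s) \<longrightarrow> z y \<le> z s"
        using max by (auto simp: abs_less_iff)
    qed
    then show False using crit \<open>K < z s\<close> by force
  qed
  then show ?thesis using max assms(6) by simp
qed

lemma restoring_dominates:
  assumes "((\<sigma> + 2 * b\<^sup>2) / c) powr (1 / (p - 1)) \<le> y"
  shows "\<sigma> * y - c * y powr p \<le> - 2 * b\<^sup>2 * y"
proof -
  have "0 < \<sigma> + 2 * b\<^sup>2" using \<sigma>_pos by (simp add: add_pos_nonneg)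
  then have "0 < ((\<sigma> + 2 * b\<^sup>2) / c) powr (1 / (p - 1))" using c_pos by simp
  then have "y > 0" using assms by linarith
  have "(\<sigma> + 2 * b\<^sup>2) / c \<le> y powr (p - 1)"
    using assms \<sigma>_pos c_pos p_gt_1 by (intro powr_ge_if_root_le) auto
  then have "y * (\<sigma> + 2 * b\<^sup>2) \<le> y * (c * y powr (p - 1))"
    using c_pos \<open>y > 0\<close> by (intro mult_left_mono) (auto simp: field_simps)
  moreover have "y powr p = y * y powr (p - 1)"
    using powr_mult_base[of y "p - 1"] \<open>y > 0\<close> by simp
  ultimately show ?thesis by (simp add: algebra_simps)
qed

text \<open>On a region where the restoring force dominates, a growing solution either turns
  around, or grows like \<open>e\<^sup>2\<^sup>b\<^sup>t\<close> while \<open>z'' \<le> b z'\<close> only permits \<open>z' = O(e\<^sup>b\<^sup>t)\<close>.\<close>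

lemma turns_around:
  assumes up: "\<And>x. t\<^sub>0 \<le> x \<Longrightarrow> z t\<^sub>0 \<le> z x"
    and restoring: "\<And>x. t\<^sub>0 \<le> x \<Longrightarrow> \<sigma> * z x - c * z x powr p \<le> - 2 * b\<^sup>2 * z x"
    and slow: "z' t\<^sub>0 < 2 * b * z t\<^sub>0"
  shows "\<exists>t\<ge>t\<^sub>0. z' t < 0"
proof -
  define f where "f t = z' t - 2 * b * z t\<^sub>0" for t
  have f': "DERIV f x :> z'' x" for x unfolding f_def by (auto intro!: derivative_eq_intros deriv2)
  have "z'' x \<le> b * f x" if "t\<^sub>0 \<le> x" for x
  proof -
    have "b\<^sup>2 * z t\<^sub>0 \<le> b\<^sup>2 * z x" using up[OF that] by (simp add: mult_left_mono)
    then show ?thesis using ineq[of x] restoring[OF that] by (simp add: f_def algebra_simps power2_eq_square)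
  qed
  then have growth: "f t \<le> exp (b * (t - t\<^sub>0)) * f t\<^sub>0" if "t\<^sub>0 \<le> t" for t
    using DERIV_le_mult_imp_exp_bound[OF f'] that by blast
  have "f t\<^sub>0 < 0" using slow by (simp add: f_def)
  obtain t where "t \<ge> t\<^sub>0" and t: "(2 * b * z t\<^sub>0 + 1) / - f t\<^sub>0 \<le> exp (b * (t - t\<^sub>0))"
    using exp_growth_exceeds[OF b_pos] by blast
  then have "2 * b * z t\<^sub>0 + 1 \<le> exp (b * (t - t\<^sub>0)) * - f t\<^sub>0"
    using \<open>f t\<^sub>0 < 0\<close> by (subst (asm) pos_divide_le_eq) auto
  then have "exp (b * (t - t\<^sub>0)) * f t\<^sub>0 \<le> - (2 * b * z t\<^sub>0 + 1)" by simp
  then show ?thesis using growth[OF \<open>t \<ge> t\<^sub>0\<close>] \<open>t \<ge> t\<^sub>0\<close> by (intro exI[of _ t]) (simp add: f_def)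
qed

lemma not_eventually_fast:
  assumes restoring: "\<And>x. t\<^sub>0 \<le> x \<Longrightarrow> \<sigma> * z x - c * z x powr p \<le> 0"
    and fast: "\<And>x. t\<^sub>0 \<le> x \<Longrightarrow> 2 * b * z x \<le> z' x" and "z t\<^sub>0 > 0"
  shows False
proof -
  have lower: "exp (2 * b * (t - t\<^sub>0)) * z t\<^sub>0 \<le> z t" if "t\<^sub>0 \<le> t" for t
    using DERIV_le_mult_imp_exp_bound[of t\<^sub>0 "\<lambda>t. - z t" "\<lambda>t. - z' t" "2 * b" t] fast that
    by (auto intro: DERIV_minus deriv)
  have "z'' x \<le> b * z' x" if "t\<^sub>0 \<le> x" for x
    using ineq[of x] restoring[OF that] by linarith
  then have upper: "z' t \<le> exp (b * (t - t\<^sub>0)) * z' t\<^sub>0" if "t\<^sub>0 \<le> t" for t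
    using DERIV_le_mult_imp_exp_bound[OF deriv2] that by blast
  obtain t where "t \<ge> t\<^sub>0" and t: "z' t\<^sub>0 / (2 * b * z t\<^sub>0) + 1 \<le> exp (b * (t - t\<^sub>0))"
    using exp_growth_exceeds[OF b_pos] by blast
  define E where "E = exp (b * (t - t\<^sub>0))"
  have "2 * b * (t - t\<^sub>0) = b * (t - t\<^sub>0) + b * (t - t\<^sub>0)" by simp
  then have "exp (2 * b * (t - t\<^sub>0)) = E * E" unfolding E_def by (simp only: exp_add)
  then have "2 * b * (E * E * z t\<^sub>0) \<le> 2 * b * z t"
    using lower[OF \<open>t \<ge> t\<^sub>0\<close>] b_pos by (intro mult_left_mono) auto
  also have "\<dots> \<le> E * z' t\<^sub>0" using fast[OF \<open>t \<ge> t\<^sub>0\<close>] upper[OF \<open>t \<ge> t\<^sub>0\<close>] by (simp add: E_def)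
  finally have "2 * b * (E * E * z t\<^sub>0) \<le> E * z' t\<^sub>0" .
  then have "E * (2 * b * z t\<^sub>0) \<le> z' t\<^sub>0" using E_def by (simp add: algebra_simps)
  moreover have "z' t\<^sub>0 / (2 * b * z t\<^sub>0) < E" using t by (simp add: E_def)
  then have "z' t\<^sub>0 < E * (2 * b * z t\<^sub>0)"
    using \<open>z t\<^sub>0 > 0\<close> b_pos by (simp add: pos_divide_less_eq)
  ultimately show False by simp
qed

lemma bounded_if_nondecreasing:
  assumes up: "\<And>t. t\<^sub>0 \<le> t \<Longrightarrow> z' t \<ge> 0"
  shows "\<exists>M. \<forall>t\<ge>t\<^sub>0. z t \<le> M"
proof (rule ccontr)
  define R where "R = ((\<sigma> + 2 * b\<^sup>2) / c) powr (1 / (p - 1))"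
  have mono: "z x \<le> z t" if "t\<^sub>0 \<le> x" "x \<le> t" for x t
    using that(2) by (rule DERIV_nonneg_imp_nondecreasing) (use deriv up that(1) in force)
  assume "\<not> ?thesis"
  then obtain t\<^sub>1 where "t\<^sub>0 \<le> t\<^sub>1" "R < z t\<^sub>1" by (meson not_le)
  moreover have "0 \<le> R" by (simp add: R_def)
  ultimately have "0 < z t\<^sub>1" by linarith
  have restoring: "\<sigma> * z x - c * z x powr p \<le> - 2 * b\<^sup>2 * z x" if "t\<^sub>1 \<le> x" for x
    using mono[of t\<^sub>1 x] that \<open>t\<^sub>0 \<le> t\<^sub>1\<close> \<open>R < z t\<^sub>1\<close> unfolding R_def
    by (intro restoring_dominates) simp
  show False
  proof (cases "\<exists>t\<^sub>2\<ge>t\<^sub>1. z' t\<^sub>2 < 2 * b * z t\<^sub>2")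
    case True
    then obtain t\<^sub>2 where "t\<^sub>1 \<le> t\<^sub>2" "z' t\<^sub>2 < 2 * b * z t\<^sub>2" by blast
    have "\<exists>t\<ge>t\<^sub>2. z' t < 0"
      by (rule turns_around) (use mono restoring \<open>t\<^sub>0 \<le> t\<^sub>1\<close> \<open>t\<^sub>1 \<le> t\<^sub>2\<close> \<open>z' t\<^sub>2 < 2 * b * z t\<^sub>2\<close> in auto)
    then obtain t where "t \<ge> t\<^sub>2" "z' t < 0" by blast
    then show False using up[of t] \<open>t\<^sub>0 \<le> t\<^sub>1\<close> \<open>t\<^sub>1 \<le> t\<^sub>2\<close> by simp
  next
    case False
    show False
    proof (rule not_eventually_fast)
      fix x assume "t\<^sub>1 \<le> x"
      have "0 \<le> 2 * b\<^sup>2 * z x" using nonneg[of x] by simp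
      then show "\<sigma> * z x - c * z x powr p \<le> 0" using restoring[OF \<open>t\<^sub>1 \<le> x\<close>] by linarith
      show "2 * b * z x \<le> z' x" using False \<open>t\<^sub>1 \<le> x\<close> by (simp add: not_less)
    qed (rule \<open>0 < z t\<^sub>1\<close>)
  qed
qed

lemma bounded: "\<exists>M. \<forall>t\<ge>0. z t \<le> M"
proof -
  define K where "K = max (z 0) ((\<sigma> * (p + 1) / c) powr (1 / (p - 1)))"
  have crit: "z' s = 0 \<Longrightarrow> z s < K" for s
    using critical_value_less_root[of s] by (simp add: K_def)
  show ?thesis
  proof (cases "\<forall>t\<ge>0. z t \<le> K")
    case False
    then obtain t\<^sub>1 where "0 \<le> t\<^sub>1" "K < z t\<^sub>1" by (auto simp: not_le)
    have max: "z x \<le> z t" if "x \<in> {0..t}" "t\<^sub>1 \<le> t" for x t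
      using max_at_right_end[OF crit _ \<open>0 \<le> t\<^sub>1\<close> \<open>K < z t\<^sub>1\<close>] that by (simp add: K_def)
    have "z' t \<ge> 0" if "t\<^sub>1 \<le> t" for t
    proof (rule ccontr)
      assume "\<not> z' t \<ge> 0"
      then obtain d where "d > 0" and "\<And>h. 0 < h \<Longrightarrow> h < d \<Longrightarrow> z (t + h) < z t"
        using DERIV_neg_dec_right[OF deriv, of t] by force
      then have "z (t + d / 2) < z t" by simp
      then show False using max[of t "t + d / 2"] that \<open>0 \<le> t\<^sub>1\<close> \<open>d > 0\<close> by simp
    qed
    then obtain M where M: "\<And>t. t\<^sub>1 \<le> t \<Longrightarrow> z t \<le> M" using bounded_if_nondecreasing by blast
    have "z t \<le> M" if "0 \<le> t" for t
    proof (cases "t\<^sub>1 \<le> t")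
      case False
      then show ?thesis using max[of t t\<^sub>1] M[of t\<^sub>1] that by simp
    qed (rule M)
    then show ?thesis by blast
  qed blast
qed

end

section \<open>Anti-damped equations and dissipation\<close>

text \<open>Against anti-damping, a slope above the forcing threshold \<open>C / b\<close> is never lost.\<close>

lemma anti_damped_escape:
  fixes w w' w'' :: "real \<Rightarrow> real"
  assumes b: "b > 0" and "C \<ge> 0" and w': "\<And>t. DERIV w t :> w' t" and w'': "\<And>t. DERIV w' t :> w'' t"
    and ge: "\<And>t. t \<ge> t\<^sub>0 \<Longrightarrow> b * w' t - C \<le> w'' t" and fast: "C / b < w' t\<^sub>0"
  shows "\<exists>t\<ge>t\<^sub>0. w t > M"
proof (rule DERIV_ge_pos_imp_unbounded[OF w'])
  define f where "f t = C / b - w' t" for t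
  have f': "DERIV f x :> - w'' x" for x unfolding f_def by (auto intro!: derivative_eq_intros w'')
  have "- w'' x \<le> b * f x" if "t\<^sub>0 \<le> x" for x
    using ge[OF that] b by (simp add: f_def algebra_simps)
  then have growth: "f t \<le> exp (b * (t - t\<^sub>0)) * f t\<^sub>0" if "t\<^sub>0 \<le> t" for t
    using DERIV_le_mult_imp_exp_bound[OF f'] that by blast
  have "f t\<^sub>0 < 0" using fast by (simp add: f_def)
  have "0 \<le> C / b" using b \<open>C \<ge> 0\<close> by simp
  then show "0 < w' t\<^sub>0" using fast by linarith
  fix t assume "t\<^sub>0 \<le> t"
  then have "f t\<^sub>0 * exp (b * (t - t\<^sub>0)) \<le> f t\<^sub>0 * 1"
    using \<open>f t\<^sub>0 < 0\<close> b by (intro mult_left_mono_neg) auto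
  then show "w' t\<^sub>0 \<le> w' t" using growth[OF \<open>t\<^sub>0 \<le> t\<close>] by (simp add: f_def mult.commute)
qed

lemma anti_damped_slope_bound:
  fixes w w' w'' :: "real \<Rightarrow> real"
  assumes b: "b > 0" and "C \<ge> 0" and "D \<ge> 0"
    and w': "\<And>t. DERIV w t :> w' t" and w'': "\<And>t. DERIV w' t :> w'' t"
    and bounded: "\<And>t. t \<ge> 0 \<Longrightarrow> 0 \<le> w t \<and> w t \<le> K"
    and lower: "\<And>t. t \<ge> 0 \<Longrightarrow> b * w' t - C \<le> w'' t"
    and upper: "\<And>t. t \<ge> 0 \<Longrightarrow> w'' t \<le> b * w' t + D"
    and "t \<ge> 0"
  shows "- D / b \<le> w' t \<and> w' t \<le> C / b"
proof
  show "w' t \<le> C / b"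
  proof (rule ccontr)
    assume "\<not> w' t \<le> C / b"
    then have "\<exists>t'\<ge>t. w t' > K"
      by (intro anti_damped_escape[OF b \<open>C \<ge> 0\<close> w' w'']) (use lower \<open>t \<ge> 0\<close> in auto)
    then obtain t' where "t' \<ge> t" "w t' > K" by blast
    then show False using bounded[of t'] \<open>t \<ge> 0\<close> by simp
  qed
  show "- D / b \<le> w' t"
  proof (rule ccontr)
    assume "\<not> - D / b \<le> w' t"
    then have "D / b < - w' t" by simp
    moreover have "b * - w' s - D \<le> - w'' s" if "s \<ge> t" for s
      using upper[of s] that \<open>t \<ge> 0\<close> by simp
    ultimately have "\<exists>t'\<ge>t. - w t' > 0"
      by (intro anti_damped_escape[OF b \<open>D \<ge> 0\<close>]) (use w' w'' in \<open>auto intro: DERIV_minus\<close>)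
    then obtain t' where "t' \<ge> t" "- w t' > 0" by blast
    then show False using bounded[of t'] \<open>t \<ge> 0\<close> by simp
  qed
qed

text \<open>If the energy increases at rate at least \<open>b v\<^sup>2\<close> and converges, then \<open>v \<rightarrow> 0\<close>: otherwise \<open>v\<close>, being
  Lipschitz, stays away from \<open>0\<close> on intervals of fixed length, each contributing a fixed energy gain.\<close>

lemma dissipation_tendsto_zero:
  fixes E E' v v' :: "real \<Rightarrow> real"
  assumes b: "b > 0" and B: "B > 0"
    and E': "\<And>t. DERIV E t :> E' t" and gain: "\<And>t. t \<ge> 0 \<Longrightarrow> b * (v t)\<^sup>2 \<le> E' t"
    and lim: "(E \<longlongrightarrow> L) at_top"
    and v': "\<And>t. DERIV v t :> v' t" and lipschitz: "\<And>t. t \<ge> 0 \<Longrightarrow> \<bar>v' t\<bar> \<le> B"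
  shows "(v \<longlongrightarrow> 0) at_top"
proof (rule tendstoI)
  fix \<epsilon> :: real assume \<epsilon>: "\<epsilon> > 0"
  define \<delta> where "\<delta> = \<epsilon> / (2 * B)"
  have \<delta>: "\<delta> > 0" using \<epsilon> B by (simp add: \<delta>_def)
  have "filterlim (\<lambda>t. t + \<delta>) at_top at_top"
    using filterlim_tendsto_add_at_top[OF tendsto_const[of \<delta>] filterlim_ident] by (simp add: add.commute)
  with lim have "((\<lambda>t. E (t + \<delta>)) \<longlongrightarrow> L) at_top" by (rule filterlim_compose)
  then have increments: "((\<lambda>t. E (t + \<delta>) - E t) \<longlongrightarrow> 0) at_top"
    using tendsto_diff[OF _ lim] by fastforce
  have "\<delta> * b * \<epsilon>\<^sup>2 / 4 > 0" using \<delta> b \<epsilon> by simp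
  from tendstoD[OF increments this]
  have "\<forall>\<^sub>F t in at_top. \<bar>E (t + \<delta>) - E t\<bar> < \<delta> * b * \<epsilon>\<^sup>2 / 4"
    by (simp add: dist_real_def)
  with eventually_ge_at_top[of 0] show "\<forall>\<^sub>F t in at_top. dist (v t) 0 < \<epsilon>"
  proof eventually_elim
    case (elim t)
    show ?case
    proof (rule ccontr)
      assume "\<not> dist (v t) 0 < \<epsilon>"
      then have "\<epsilon> \<le> \<bar>v t\<bar>" by simp
      obtain \<xi> where \<xi>: "t < \<xi>" "\<xi> < t + \<delta>" "E (t + \<delta>) - E t = \<delta> * E' \<xi>"
        using MVT2[of t "t + \<delta>" E E'] E' \<delta> by auto
      obtain \<eta> where \<eta>: "t < \<eta>" "\<eta> < \<xi>" "v \<xi> - v t = (\<xi> - t) * v' \<eta>"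
        using MVT2[of t \<xi> v v'] v' \<xi>(1) by auto
      have "\<bar>v \<xi> - v t\<bar> \<le> \<delta> * B"
        unfolding \<eta>(3) abs_mult using \<xi> \<eta> lipschitz[of \<eta>] elim by (intro mult_mono) auto
      also have "\<dots> = \<epsilon> / 2" using B by (simp add: \<delta>_def)
      finally have "\<epsilon> / 2 \<le> \<bar>v \<xi>\<bar>" using \<open>\<epsilon> \<le> \<bar>v t\<bar>\<close> by linarith
      then have "(\<epsilon> / 2)\<^sup>2 \<le> (v \<xi>)\<^sup>2" using \<epsilon> by (metis abs_le_square_iff abs_of_pos half_gt_zero)
      then have "b * (\<epsilon> / 2)\<^sup>2 \<le> b * (v \<xi>)\<^sup>2" using b by simp
      also have "\<dots> \<le> E' \<xi>" using gain[of \<xi>] \<xi> elim by simp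
      finally have "\<delta> * (b * (\<epsilon> / 2)\<^sup>2) \<le> \<delta> * E' \<xi>" using \<delta> by simp
      then show False using elim \<xi>(3) by (simp add: power_divide)
    qed
  qed
qed

lemma increments_tendsto_zero:
  fixes f f' :: "real \<Rightarrow> real" and \<tau> \<xi> :: "nat \<Rightarrow> real"
  assumes f': "\<And>t. DERIV f t :> f' t" and "(f' \<longlongrightarrow> 0) at_top"
    and \<tau>: "filterlim \<tau> at_top sequentially" and \<xi>: "\<And>n. \<tau> n \<le> \<xi> n" "\<And>n. \<xi> n \<le> \<tau> n + 1"
  shows "(\<lambda>n. f (\<xi> n) - f (\<tau> n)) \<longlonglongrightarrow> 0"
proof (rule LIMSEQ_I)
  fix r :: real assume "r > 0"
  then have "\<forall>\<^sub>F t in at_top. \<bar>f' t\<bar> < r"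
    using tendstoD[OF assms(2), of r] by (simp add: dist_real_def)
  then obtain T where T: "\<And>t. t \<ge> T \<Longrightarrow> \<bar>f' t\<bar> < r" by (auto simp: eventually_at_top_linorder)
  have "\<forall>\<^sub>F n in sequentially. T \<le> \<tau> n" using \<tau> by (simp add: filterlim_at_top)
  then obtain N where N: "\<And>n. n \<ge> N \<Longrightarrow> \<tau> n \<ge> T" by (auto simp: eventually_sequentially)
  have "\<bar>f (\<xi> n) - f (\<tau> n)\<bar> < r" if "n \<ge> N" for n
  proof (cases "\<tau> n = \<xi> n")
    case False
    then have "\<tau> n < \<xi> n" using \<xi>(1)[of n] by simp
    then obtain \<eta> where \<eta>: "\<tau> n < \<eta>" "f (\<xi> n) - f (\<tau> n) = (\<xi> n - \<tau> n) * f' \<eta>"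
      using MVT2[of "\<tau> n" "\<xi> n" f f'] f' by auto
    have "\<bar>(\<xi> n - \<tau> n) * f' \<eta>\<bar> \<le> 1 * \<bar>f' \<eta>\<bar>"
      unfolding abs_mult using \<xi>[of n] by (intro mult_right_mono) auto
    also have "\<dots> < r" using T[of \<eta>] N[OF that] \<eta>(1) by simp
    finally show ?thesis using \<eta>(2) by simp
  qed (use \<open>r > 0\<close> in simp)
  then show "\<exists>N. \<forall>n\<ge>N. norm (f (\<xi> n) - f (\<tau> n) - 0) < r" by auto
qed

section \<open>Equilibria\<close>

lemma equilibrium_rescaled:
  fixes a\<^sub>1 a\<^sub>2 \<sigma> \<mu> \<beta> p q :: real
  assumes \<sigma>: "\<sigma> > 0" and q: "q > 0" and p: "p = 2 * q + 1" and "a\<^sub>1 > 0" "a\<^sub>2 \<ge> 0"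
    and eq: "\<sigma> * a\<^sub>1 = \<mu> * a\<^sub>1 powr p + \<beta> * a\<^sub>1 powr q * a\<^sub>2 powr (q + 1)"
  defines "s \<equiv> \<sigma> powr (1 / (p - 1))"
  shows "\<mu> * (a\<^sub>1 / s) powr (2 * q) + \<beta> * (a\<^sub>1 / s) powr (q - 1) * (a\<^sub>2 / s) powr (q + 1) = 1"
proof -
  have "s > 0" using \<sigma> by (simp add: s_def)
  have s_pow: "s powr (2 * q) = \<sigma>" using p q \<sigma> by (simp add: s_def powr_powr)
  then have s_pow': "s powr (q - 1) * s powr (q + 1) = \<sigma>" by (simp add: powr_add[symmetric])
  have "a\<^sub>1 powr p = a\<^sub>1 * a\<^sub>1 powr (2 * q)" "a\<^sub>1 powr q = a\<^sub>1 * a\<^sub>1 powr (q - 1)"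
    using p \<open>a\<^sub>1 > 0\<close> powr_mult_base[of a\<^sub>1 "2 * q"] powr_mult_base[of a\<^sub>1 "q - 1"] by (simp_all add: add.commute)
  then have "a\<^sub>1 * \<sigma> = a\<^sub>1 * (\<mu> * a\<^sub>1 powr (2 * q) + \<beta> * a\<^sub>1 powr (q - 1) * a\<^sub>2 powr (q + 1))"
    using eq by (simp add: algebra_simps)
  then have "\<mu> * a\<^sub>1 powr (2 * q) + \<beta> * a\<^sub>1 powr (q - 1) * a\<^sub>2 powr (q + 1) = \<sigma>"
    using \<open>a\<^sub>1 > 0\<close> by simp
  moreover have "\<mu> * (a\<^sub>1 / s) powr (2 * q) + \<beta> * (a\<^sub>1 / s) powr (q - 1) * (a\<^sub>2 / s) powr (q + 1)
      = (\<mu> * a\<^sub>1 powr (2 * q) + \<beta> * a\<^sub>1 powr (q - 1) * a\<^sub>2 powr (q + 1)) / \<sigma>"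
    unfolding powr_divide using s_pow s_pow' \<sigma> \<open>s > 0\<close> by (simp add: field_simps)
  ultimately show ?thesis using \<sigma> by simp
qed

text \<open>Multiplying the equilibrium equations by \<open>a\<^sub>1\<close> and \<open>a\<^sub>2\<close> shows that the energy of an equilibrium
  is \<open>-(p - 1) \<sigma> (a\<^sub>1\<^sup>2 + a\<^sub>2\<^sup>2) / (2 (p + 1))\<close>; the scaling \<open>(k, l) = \<sigma>\<^sup>-\<^sup>1\<^sup>/\<^sup>(\<^sup>p\<^sup>-\<^sup>1\<^sup>) (a\<^sub>1, a\<^sub>2)\<close> then normalises it.\<close>

lemma equilibrium_energy:
  fixes a\<^sub>1 a\<^sub>2 \<sigma> \<mu>\<^sub>1 \<mu>\<^sub>2 \<beta> p q :: real
  assumes \<sigma>: "\<sigma> > 0" and q: "q > 0" and p: "p = 2 * q + 1" and a\<^sub>1: "a\<^sub>1 \<ge> 0" and a\<^sub>2: "a\<^sub>2 \<ge> 0"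
    and eq\<^sub>1: "\<sigma> * a\<^sub>1 = \<mu>\<^sub>1 * a\<^sub>1 powr p + \<beta> * a\<^sub>1 powr q * a\<^sub>2 powr (q + 1)"
    and eq\<^sub>2: "\<sigma> * a\<^sub>2 = \<mu>\<^sub>2 * a\<^sub>2 powr p + \<beta> * a\<^sub>2 powr q * a\<^sub>1 powr (q + 1)"
  defines "L \<equiv> - \<sigma> * (a\<^sub>1\<^sup>2 + a\<^sub>2\<^sup>2) / 2 + 1 / (p + 1) *
      (\<mu>\<^sub>1 * a\<^sub>1 powr (p + 1) + 2 * \<beta> * a\<^sub>1 powr (q + 1) * a\<^sub>2 powr (q + 1) + \<mu>\<^sub>2 * a\<^sub>2 powr (p + 1))"
  shows "L = 0 \<or>
            (\<exists>k l. k \<ge> 0 \<and> l \<ge> 0 \<and> (k \<noteq> 0 \<or> l \<noteq> 0) \<and>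
               (k > 0 \<and> l > 0 \<longrightarrow>
                  \<mu>\<^sub>1 * k powr (2 * q) + \<beta> * k powr (q - 1) * l powr (q + 1) = 1 \<and>
                  \<mu>\<^sub>2 * l powr (2 * q) + \<beta> * l powr (q - 1) * k powr (q + 1) = 1) \<and>
               (k = 0 \<longrightarrow> \<mu>\<^sub>2 * l powr (2 * q) = 1) \<and>
               (l = 0 \<longrightarrow> \<mu>\<^sub>1 * k powr (2 * q) = 1) \<and>
               L = - (p - 1) / (2 * (p + 1)) * (k\<^sup>2 + l\<^sup>2) * \<sigma> powr ((p + 1) / (p - 1)))"
proof -
  have e: "x powr (r + 1) = x * x powr r" if "x \<ge> 0" for x r :: real
    using powr_mult_base[OF that, of r] by (simp add: add.commute)
  have "\<sigma> * a\<^sub>1\<^sup>2 = \<mu>\<^sub>1 * a\<^sub>1 powr (p + 1) + \<beta> * a\<^sub>1 powr (q + 1) * a\<^sub>2 powr (q + 1)"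
    using arg_cong[OF eq\<^sub>1, of "\<lambda>x. a\<^sub>1 * x"] unfolding e[OF a\<^sub>1] e[OF a\<^sub>2]
    by (simp add: algebra_simps power2_eq_square)
  moreover have "\<sigma> * a\<^sub>2\<^sup>2 = \<mu>\<^sub>2 * a\<^sub>2 powr (p + 1) + \<beta> * a\<^sub>1 powr (q + 1) * a\<^sub>2 powr (q + 1)"
    using arg_cong[OF eq\<^sub>2, of "\<lambda>x. a\<^sub>2 * x"] unfolding e[OF a\<^sub>1] e[OF a\<^sub>2]
    by (simp add: algebra_simps power2_eq_square)
  ultimately have "L = - \<sigma> * (a\<^sub>1\<^sup>2 + a\<^sub>2\<^sup>2) / 2 + 1 / (p + 1) * (\<sigma> * (a\<^sub>1\<^sup>2 + a\<^sub>2\<^sup>2))"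
    unfolding L_def by (simp add: algebra_simps)
  then have L: "L = - (p - 1) / (2 * (p + 1)) * \<sigma> * (a\<^sub>1\<^sup>2 + a\<^sub>2\<^sup>2)"
    using p q by (simp add: field_simps)
  show ?thesis
  proof (cases "a\<^sub>1 = 0 \<and> a\<^sub>2 = 0")
    case True
    then show ?thesis using L by simp
  next
    case False
    define s where "s = \<sigma> powr (1 / (p - 1))"
    have "s > 0" using \<sigma> by (simp add: s_def)
    have "(p + 1) / (p - 1) = 1 + 2 / (p - 1)" using p q by (simp add: field_simps)
    then have "\<sigma> powr ((p + 1) / (p - 1)) = \<sigma> powr (1 + 2 / (p - 1))" by simp
    also have "\<dots> = \<sigma> * s\<^sup>2" using \<sigma> by (simp add: s_def powr_add powr_powr power2_eq_square powr_add[symmetric])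
    finally have "\<sigma> powr ((p + 1) / (p - 1)) = \<sigma> * s\<^sup>2" .
    moreover have "(a\<^sub>1 / s)\<^sup>2 + (a\<^sub>2 / s)\<^sup>2 = (a\<^sub>1\<^sup>2 + a\<^sub>2\<^sup>2) / s\<^sup>2"
      by (simp add: power_divide add_divide_distrib)
    ultimately have "L = - (p - 1) / (2 * (p + 1)) * ((a\<^sub>1 / s)\<^sup>2 + (a\<^sub>2 / s)\<^sup>2) * \<sigma> powr ((p + 1) / (p - 1))"
      using \<open>s > 0\<close> by (simp add: L)
    moreover have "\<mu>\<^sub>1 * (a\<^sub>1 / s) powr (2 * q) + \<beta> * (a\<^sub>1 / s) powr (q - 1) * (a\<^sub>2 / s) powr (q + 1) = 1"
      if "a\<^sub>1 > 0" using equilibrium_rescaled[OF \<sigma> q p that a\<^sub>2 eq\<^sub>1] by (simp add: s_def)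
    moreover have "\<mu>\<^sub>2 * (a\<^sub>2 / s) powr (2 * q) + \<beta> * (a\<^sub>2 / s) powr (q - 1) * (a\<^sub>1 / s) powr (q + 1) = 1"
      if "a\<^sub>2 > 0" using equilibrium_rescaled[OF \<sigma> q p that a\<^sub>1 eq\<^sub>2] by (simp add: s_def)
    ultimately show ?thesis
      using False a\<^sub>1 a\<^sub>2 \<open>s > 0\<close>
      by (intro disjI2 exI[of _ "a\<^sub>1 / s"] exI[of _ "a\<^sub>2 / s"]) (auto simp: zero_less_divide_iff)
  qed
qed

section \<open>The Emden--Fowler system\<close>

lemma powr_sum_le:
  fixes x y m p :: real
  assumes "x \<ge> 0" "y \<ge> 0" "p > 0" "m > 0" "m \<le> \<mu>\<^sub>1" "m \<le> \<mu>\<^sub>2"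
  shows "m / 2 powr p * (x + y) powr p \<le> \<mu>\<^sub>1 * x powr p + \<mu>\<^sub>2 * y powr p"
proof -
  have "((x + y) / 2) powr p \<le> (max x y) powr p" using assms by (intro powr_mono2) auto
  also have "\<dots> \<le> x powr p + y powr p" by (cases "x \<le> y") (auto simp: max_def)
  finally have "m * ((x + y) powr p / 2 powr p) \<le> m * (x powr p + y powr p)"
    using assms by (intro mult_left_mono) (auto simp: powr_divide)
  also have "\<dots> \<le> \<mu>\<^sub>1 * x powr p + \<mu>\<^sub>2 * y powr p"
    using assms by (simp add: distrib_left add_mono mult_right_mono)
  finally show ?thesis by simp
qed

lemma coupling_mono:
  fixes x y X Y \<mu> \<beta> p q :: real
  assumes "0 \<le> x" "x \<le> X" "0 \<le> y" "y \<le> Y" "\<mu> \<ge> 0" "\<beta> \<ge> 0" "p > 0" "q > 0"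
  shows "\<mu> * x powr p + \<beta> * x powr q * y powr (q + 1) \<le> \<mu> * X powr p + \<beta> * X powr q * Y powr (q + 1)"
  using assms by (intro add_mono mult_left_mono mult_mono powr_mono2) auto

locale emden_fowler_system =
  fixes b \<sigma> \<mu>\<^sub>1 \<mu>\<^sub>2 \<beta> p q :: real and w\<^sub>1 w\<^sub>2 w\<^sub>1' w\<^sub>2' w\<^sub>1'' w\<^sub>2'' :: "real \<Rightarrow> real"
  assumes b_pos: "b > 0" and \<sigma>_pos: "\<sigma> > 0" and \<mu>\<^sub>1_pos: "\<mu>\<^sub>1 > 0" and \<mu>\<^sub>2_pos: "\<mu>\<^sub>2 > 0"
    and \<beta>_pos: "\<beta> > 0" and q_pos: "q > 0" and p_eq: "p = 2 * q + 1"
    and nonneg\<^sub>1: "\<And>t. w\<^sub>1 t \<ge> 0" and nonneg\<^sub>2: "\<And>t. w\<^sub>2 t \<ge> 0"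
    and deriv\<^sub>1: "\<And>t. DERIV w\<^sub>1 t :> w\<^sub>1' t" and deriv\<^sub>2: "\<And>t. DERIV w\<^sub>2 t :> w\<^sub>2' t"
    and deriv\<^sub>1': "\<And>t. DERIV w\<^sub>1' t :> w\<^sub>1'' t" and deriv\<^sub>2': "\<And>t. DERIV w\<^sub>2' t :> w\<^sub>2'' t"
    and ode\<^sub>1: "\<And>t. w\<^sub>1'' t = b * w\<^sub>1' t + \<sigma> * w\<^sub>1 t - (\<mu>\<^sub>1 * w\<^sub>1 t powr p + \<beta> * w\<^sub>1 t powr q * w\<^sub>2 t powr (q + 1))"
    and ode\<^sub>2: "\<And>t. w\<^sub>2'' t = b * w\<^sub>2' t + \<sigma> * w\<^sub>2 t - (\<mu>\<^sub>2 * w\<^sub>2 t powr p + \<beta> * w\<^sub>2 t powr q * w\<^sub>1 t powr (q + 1))"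
begin

lemma swap: "emden_fowler_system b \<sigma> \<mu>\<^sub>2 \<mu>\<^sub>1 \<beta> p q w\<^sub>2 w\<^sub>1 w\<^sub>2' w\<^sub>1' w\<^sub>2'' w\<^sub>1''"
  by unfold_locales (use b_pos \<sigma>_pos \<mu>\<^sub>1_pos \<mu>\<^sub>2_pos \<beta>_pos q_pos p_eq nonneg\<^sub>1 nonneg\<^sub>2 deriv\<^sub>1 deriv\<^sub>2
      deriv\<^sub>1' deriv\<^sub>2' ode\<^sub>1 ode\<^sub>2 in auto)

lemma p_gt_1: "p > 1"
  using p_eq q_pos by simp

definition energy :: "real \<Rightarrow> real" where
  "energy t = 1/2 * ((w\<^sub>1' t)\<^sup>2 + (w\<^sub>2' t)\<^sup>2 - \<sigma> * ((w\<^sub>1 t)\<^sup>2 + (w\<^sub>2 t)\<^sup>2)) + 1 / (p + 1) *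
     (\<mu>\<^sub>1 * w\<^sub>1 t powr (p + 1) + 2 * \<beta> * w\<^sub>1 t powr (q + 1) * w\<^sub>2 t powr (q + 1) + \<mu>\<^sub>2 * w\<^sub>2 t powr (p + 1))"

lemma energy_deriv: "DERIV energy t :> b * ((w\<^sub>1' t)\<^sup>2 + (w\<^sub>2' t)\<^sup>2)"
proof -
  have pow: "DERIV (\<lambda>t. w t powr (r + 1)) t :> (r + 1) * w t powr r * w' t"
    if "r > 0" "\<And>t. w t \<ge> 0" "\<And>t. DERIV w t :> w' t" for w w' :: "real \<Rightarrow> real" and r :: real
    using DERIV_powr_of_nonneg[of "r + 1" w, OF _ that(2,3)] that(1) by simp
  have p_pos: "p > 0" using p_gt_1 by simp
  note P\<^sub>1 = pow[OF p_pos nonneg\<^sub>1 deriv\<^sub>1] and P\<^sub>2 = pow[OF p_pos nonneg\<^sub>2 deriv\<^sub>2]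
  note Q\<^sub>1 = pow[OF q_pos nonneg\<^sub>1 deriv\<^sub>1] and Q\<^sub>2 = pow[OF q_pos nonneg\<^sub>2 deriv\<^sub>2]
  have "DERIV energy t :>
      1/2 * ((2 * w\<^sub>1' t * w\<^sub>1'' t) + (2 * w\<^sub>2' t * w\<^sub>2'' t) - \<sigma> * ((2 * w\<^sub>1 t * w\<^sub>1' t) + (2 * w\<^sub>2 t * w\<^sub>2' t)))
      + 1/(p+1) * (\<mu>\<^sub>1 * ((p+1) * w\<^sub>1 t powr p * w\<^sub>1' t)
          + 2*\<beta> * ((q+1) * w\<^sub>1 t powr q * w\<^sub>1' t * w\<^sub>2 t powr (q+1) + (q+1) * w\<^sub>2 t powr q * w\<^sub>2' t * w\<^sub>1 t powr (q+1))
          + \<mu>\<^sub>2 * ((p+1) * w\<^sub>2 t powr p * w\<^sub>2' t))"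
    unfolding energy_def[abs_def] mult.assoc[of "2 * \<beta>"]
    by (intro DERIV_add DERIV_diff DERIV_cmult DERIV_mult[OF Q\<^sub>1 Q\<^sub>2] P\<^sub>1 P\<^sub>2
        DERIV_square deriv\<^sub>1 deriv\<^sub>2 deriv\<^sub>1' deriv\<^sub>2')
  moreover have "1/2 * ((2 * w\<^sub>1' t * w\<^sub>1'' t) + (2 * w\<^sub>2' t * w\<^sub>2'' t) - \<sigma> * ((2 * w\<^sub>1 t * w\<^sub>1' t) + (2 * w\<^sub>2 t * w\<^sub>2' t)))
      + 1/(p+1) * (\<mu>\<^sub>1 * ((p+1) * w\<^sub>1 t powr p * w\<^sub>1' t)
          + 2*\<beta> * ((q+1) * w\<^sub>1 t powr q * w\<^sub>1' t * w\<^sub>2 t powr (q+1) + (q+1) * w\<^sub>2 t powr q * w\<^sub>2' t * w\<^sub>1 t powr (q+1))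
          + \<mu>\<^sub>2 * ((p+1) * w\<^sub>2 t powr p * w\<^sub>2' t))
      = b * ((w\<^sub>1' t)\<^sup>2 + (w\<^sub>2' t)\<^sup>2)"
  proof -
    have "2*\<beta> * ((q+1) * w\<^sub>1 t powr q * w\<^sub>1' t * w\<^sub>2 t powr (q+1) + (q+1) * w\<^sub>2 t powr q * w\<^sub>2' t * w\<^sub>1 t powr (q+1)) / (p+1)
        = \<beta> * (w\<^sub>1 t powr q * w\<^sub>1' t * w\<^sub>2 t powr (q+1) + w\<^sub>2 t powr q * w\<^sub>2' t * w\<^sub>1 t powr (q+1))"
      using q_pos by (simp add: p_eq field_simps)
    moreover have "\<mu>\<^sub>1 * ((p+1) * w\<^sub>1 t powr p * w\<^sub>1' t) / (p+1) = \<mu>\<^sub>1 * w\<^sub>1 t powr p * w\<^sub>1' t"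
      "\<mu>\<^sub>2 * ((p+1) * w\<^sub>2 t powr p * w\<^sub>2' t) / (p+1) = \<mu>\<^sub>2 * w\<^sub>2 t powr p * w\<^sub>2' t"
      using p_gt_1 by simp_all
    ultimately show ?thesis
      unfolding ode\<^sub>1 ode\<^sub>2 by (simp add: algebra_simps power2_eq_square add_divide_distrib)
  qed
  ultimately show ?thesis by (simp only:)
qed

lemma energy_mono:
  assumes "x \<le> y"
  shows "energy x \<le> energy y"
  using assms
proof (rule DERIV_nonneg_imp_nondecreasing)
  fix t
  have "0 \<le> b * ((w\<^sub>1' t)\<^sup>2 + (w\<^sub>2' t)\<^sup>2)" using b_pos by simp
  then show "\<exists>D. DERIV energy t :> D \<and> D \<ge> 0" using energy_deriv by blast
qed

lemma sum_superlinear: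
  "superlinear_ode_ineq (\<lambda>t. w\<^sub>1 t + w\<^sub>2 t) (\<lambda>t. w\<^sub>1' t + w\<^sub>2' t) (\<lambda>t. w\<^sub>1'' t + w\<^sub>2'' t)
     b \<sigma> (min \<mu>\<^sub>1 \<mu>\<^sub>2 / 2 powr p) p"
proof
  fix t
  have "min \<mu>\<^sub>1 \<mu>\<^sub>2 / 2 powr p * (w\<^sub>1 t + w\<^sub>2 t) powr p \<le> \<mu>\<^sub>1 * w\<^sub>1 t powr p + \<mu>\<^sub>2 * w\<^sub>2 t powr p"
    using nonneg\<^sub>1 nonneg\<^sub>2 p_gt_1 \<mu>\<^sub>1_pos \<mu>\<^sub>2_pos by (intro powr_sum_le) auto
  moreover have "0 \<le> \<beta> * w\<^sub>1 t powr q * w\<^sub>2 t powr (q + 1)" "0 \<le> \<beta> * w\<^sub>2 t powr q * w\<^sub>1 t powr (q + 1)"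
    using \<beta>_pos by auto
  ultimately show "w\<^sub>1'' t + w\<^sub>2'' t
      \<le> b * (w\<^sub>1' t + w\<^sub>2' t) + \<sigma> * (w\<^sub>1 t + w\<^sub>2 t) - min \<mu>\<^sub>1 \<mu>\<^sub>2 / 2 powr p * (w\<^sub>1 t + w\<^sub>2 t) powr p"
    unfolding ode\<^sub>1 ode\<^sub>2 by (simp add: algebra_simps)
qed (use b_pos \<sigma>_pos \<mu>\<^sub>1_pos \<mu>\<^sub>2_pos p_gt_1 nonneg\<^sub>1 nonneg\<^sub>2 in
      \<open>auto intro: add_nonneg_nonneg DERIV_add deriv\<^sub>1 deriv\<^sub>2 deriv\<^sub>1' deriv\<^sub>2'\<close>)

lemma bounded: "\<exists>K\<ge>0. \<forall>t\<ge>0. w\<^sub>1 t \<le> K \<and> w\<^sub>2 t \<le> K"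
proof -
  obtain K where K: "\<And>t. t \<ge> 0 \<Longrightarrow> w\<^sub>1 t + w\<^sub>2 t \<le> K"
    using superlinear_ode_ineq.bounded[OF sum_superlinear] by blast
  then have "K \<ge> 0" using nonneg\<^sub>1[of 0] nonneg\<^sub>2[of 0] K[OF order.refl] by linarith
  moreover have "w\<^sub>1 t \<le> K \<and> w\<^sub>2 t \<le> K" if "t \<ge> 0" for t
    using K[OF that] nonneg\<^sub>1[of t] nonneg\<^sub>2[of t] by simp
  ultimately show ?thesis by blast
qed

lemma slopes_bounded\<^sub>1: "\<exists>B>0. \<forall>t\<ge>0. \<bar>w\<^sub>1' t\<bar> \<le> B \<and> \<bar>w\<^sub>1'' t\<bar> \<le> B"
proof -
  obtain K where "K \<ge> 0" and K: "\<And>t. t \<ge> 0 \<Longrightarrow> w\<^sub>1 t \<le> K \<and> w\<^sub>2 t \<le> K"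
    using bounded by blast
  define C where "C = \<mu>\<^sub>1 * K powr p + \<beta> * K powr q * K powr (q + 1)"
  define f where "f t = \<mu>\<^sub>1 * w\<^sub>1 t powr p + \<beta> * w\<^sub>1 t powr q * w\<^sub>2 t powr (q + 1)" for t
  have f: "0 \<le> f t \<and> f t \<le> C" if "t \<ge> 0" for t
    using coupling_mono[of "w\<^sub>1 t" K "w\<^sub>2 t" K \<mu>\<^sub>1 \<beta> p q] K[OF that] nonneg\<^sub>1[of t] nonneg\<^sub>2[of t]
      \<mu>\<^sub>1_pos \<beta>_pos p_gt_1 q_pos by (simp add: f_def C_def)
  have \<sigma>w: "0 \<le> \<sigma> * w\<^sub>1 t \<and> \<sigma> * w\<^sub>1 t \<le> \<sigma> * K" if "t \<ge> 0" for t
    using \<sigma>_pos nonneg\<^sub>1[of t] K[OF that] by simp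
  have "C \<ge> 0" using f[of 0] by simp
  have "0 \<le> \<sigma> * K" using \<sigma>_pos \<open>K \<ge> 0\<close> by simp
  have slope: "- (\<sigma> * K) / b \<le> w\<^sub>1' t \<and> w\<^sub>1' t \<le> C / b" if "t \<ge> 0" for t
  proof (rule anti_damped_slope_bound[OF b_pos \<open>C \<ge> 0\<close> \<open>0 \<le> \<sigma> * K\<close> deriv\<^sub>1 deriv\<^sub>1' _ _ _ that])
    fix s :: real assume "s \<ge> 0"
    show "0 \<le> w\<^sub>1 s \<and> w\<^sub>1 s \<le> K" using nonneg\<^sub>1[of s] K[OF \<open>s \<ge> 0\<close>] by simp
    show "b * w\<^sub>1' s - C \<le> w\<^sub>1'' s" "w\<^sub>1'' s \<le> b * w\<^sub>1' s + \<sigma> * K"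
      using ode\<^sub>1[of s] f[OF \<open>s \<ge> 0\<close>] \<sigma>w[OF \<open>s \<ge> 0\<close>] by (simp_all add: f_def)
  qed
  define B where "B = (\<sigma> * K) / b + C / b"
  have "0 \<le> (\<sigma> * K) / b" "0 \<le> C / b" using \<open>0 \<le> \<sigma> * K\<close> \<open>C \<ge> 0\<close> b_pos by simp_all
  then have B: "\<bar>w\<^sub>1' t\<bar> \<le> B" if "t \<ge> 0" for t
    using slope[OF that] by (simp add: B_def abs_le_iff)
  have "0 \<le> b * B" using \<open>0 \<le> C / b\<close> \<open>0 \<le> (\<sigma> * K) / b\<close> b_pos by (simp add: B_def)
  define B' where "B' = B + b * B + \<sigma> * K + C + 1"
  have "\<bar>w\<^sub>1' t\<bar> \<le> B' \<and> \<bar>w\<^sub>1'' t\<bar> \<le> B'" if "t \<ge> 0" for t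
  proof -
    have "\<bar>b * w\<^sub>1' t\<bar> \<le> b * B" using B[OF that] b_pos by (simp add: abs_mult)
    then show ?thesis using B[OF that] ode\<^sub>1[of t] f[OF that] \<sigma>w[OF that] \<open>0 \<le> b * B\<close> \<open>C \<ge> 0\<close>
      unfolding f_def B'_def abs_le_iff by linarith
  qed
  moreover have "B' > 0"
    using \<open>0 \<le> b * B\<close> \<open>0 \<le> \<sigma> * K\<close> \<open>C \<ge> 0\<close> B[of 0] by (simp add: B'_def)
  ultimately show ?thesis by blast
qed

lemma energy_bounded_above: "\<exists>M. \<forall>t\<ge>0. energy t \<le> M"
proof -
  obtain K where "K \<ge> 0" and K: "\<And>t. t \<ge> 0 \<Longrightarrow> w\<^sub>1 t \<le> K \<and> w\<^sub>2 t \<le> K"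
    using bounded by blast
  obtain B\<^sub>1 where B\<^sub>1: "\<And>t. t \<ge> 0 \<Longrightarrow> \<bar>w\<^sub>1' t\<bar> \<le> B\<^sub>1" using slopes_bounded\<^sub>1 by blast
  obtain B\<^sub>2 where B\<^sub>2: "\<And>t. t \<ge> 0 \<Longrightarrow> \<bar>w\<^sub>2' t\<bar> \<le> B\<^sub>2"
    using emden_fowler_system.slopes_bounded\<^sub>1[OF swap] by blast
  define M where "M = (B\<^sub>1\<^sup>2 + B\<^sub>2\<^sup>2) / 2 + 1 / (p + 1) *
    (\<mu>\<^sub>1 * K powr (p + 1) + 2 * \<beta> * K powr (q + 1) * K powr (q + 1) + \<mu>\<^sub>2 * K powr (p + 1))"
  have "energy t \<le> M" if "t \<ge> 0" for t
  proof -
    have "(w\<^sub>1' t)\<^sup>2 \<le> B\<^sub>1\<^sup>2" "(w\<^sub>2' t)\<^sup>2 \<le> B\<^sub>2\<^sup>2"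
      using power_mono[OF B\<^sub>1[OF that], of 2] power_mono[OF B\<^sub>2[OF that], of 2] by simp_all
    moreover have "0 \<le> \<sigma> * ((w\<^sub>1 t)\<^sup>2 + (w\<^sub>2 t)\<^sup>2)" using \<sigma>_pos by simp
    ultimately have "1/2 * ((w\<^sub>1' t)\<^sup>2 + (w\<^sub>2' t)\<^sup>2 - \<sigma> * ((w\<^sub>1 t)\<^sup>2 + (w\<^sub>2 t)\<^sup>2)) \<le> (B\<^sub>1\<^sup>2 + B\<^sub>2\<^sup>2) / 2"
      by (simp add: algebra_simps)
    moreover have "\<mu>\<^sub>1 * w\<^sub>1 t powr (p + 1) + 2 * \<beta> * w\<^sub>1 t powr (q + 1) * w\<^sub>2 t powr (q + 1) + \<mu>\<^sub>2 * w\<^sub>2 t powr (p + 1)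
        \<le> \<mu>\<^sub>1 * K powr (p + 1) + 2 * \<beta> * K powr (q + 1) * K powr (q + 1) + \<mu>\<^sub>2 * K powr (p + 1)"
      using K[OF that] nonneg\<^sub>1[of t] nonneg\<^sub>2[of t] \<mu>\<^sub>1_pos \<mu>\<^sub>2_pos \<beta>_pos p_gt_1 q_pos
      by (intro add_mono mult_left_mono mult_mono powr_mono2) auto
    then have "1 / (p + 1) * (\<mu>\<^sub>1 * w\<^sub>1 t powr (p + 1) + 2 * \<beta> * w\<^sub>1 t powr (q + 1) * w\<^sub>2 t powr (q + 1) + \<mu>\<^sub>2 * w\<^sub>2 t powr (p + 1))
        \<le> 1 / (p + 1) * (\<mu>\<^sub>1 * K powr (p + 1) + 2 * \<beta> * K powr (q + 1) * K powr (q + 1) + \<mu>\<^sub>2 * K powr (p + 1))"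
      using p_gt_1 by (intro mult_left_mono) auto
    ultimately show ?thesis unfolding energy_def M_def by (rule add_mono)
  qed
  then show ?thesis by blast
qed

lemma energy_converges: "\<exists>L. (energy \<longlongrightarrow> L) at_top"
  using energy_bounded_above nondecreasing_bounded_tendsto[of 0 energy] energy_mono by blast

lemma velocity_tendsto_zero\<^sub>1: "(w\<^sub>1' \<longlongrightarrow> 0) at_top"
proof -
  obtain L where "(energy \<longlongrightarrow> L) at_top" using energy_converges by blast
  moreover obtain B where "B > 0" "\<And>t. t \<ge> 0 \<Longrightarrow> \<bar>w\<^sub>1'' t\<bar> \<le> B" using slopes_bounded\<^sub>1 by blast
  moreover have "b * (w\<^sub>1' t)\<^sup>2 \<le> b * ((w\<^sub>1' t)\<^sup>2 + (w\<^sub>2' t)\<^sup>2)" for t using b_pos by simp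
  ultimately show ?thesis using dissipation_tendsto_zero[OF b_pos _ energy_deriv] deriv\<^sub>1' by blast
qed

lemma omega_limit_point:
  obtains \<tau> a\<^sub>1 a\<^sub>2 where "filterlim \<tau> at_top sequentially" "a\<^sub>1 \<ge> 0" "a\<^sub>2 \<ge> 0"
    "(\<lambda>n. w\<^sub>1 (\<tau> n)) \<longlonglongrightarrow> a\<^sub>1" "(\<lambda>n. w\<^sub>2 (\<tau> n)) \<longlonglongrightarrow> a\<^sub>2"
proof -
  obtain K where K: "\<And>t. t \<ge> 0 \<Longrightarrow> w\<^sub>1 t \<le> K \<and> w\<^sub>2 t \<le> K" using bounded by blast
  have "seq_compact ({0..K} \<times> {0..K})" by (intro compact_imp_seq_compact compact_Times compact_Icc)
  moreover have "\<forall>n. (w\<^sub>1 (real n), w\<^sub>2 (real n)) \<in> {0..K} \<times> {0..K}"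
    using K nonneg\<^sub>1 nonneg\<^sub>2 by simp
  ultimately obtain a r where a: "a \<in> {0..K} \<times> {0..K}" and "strict_mono r"
    and lim: "((\<lambda>n. (w\<^sub>1 (real n), w\<^sub>2 (real n))) \<circ> r) \<longlonglongrightarrow> a"
    by (rule seq_compactE)
  have "filterlim (\<lambda>n. real (r n)) at_top sequentially"
    using filterlim_compose[OF filterlim_real_sequentially filterlim_subseq[OF \<open>strict_mono r\<close>]] .
  moreover have "(\<lambda>n. w\<^sub>1 (real (r n))) \<longlonglongrightarrow> fst a" "(\<lambda>n. w\<^sub>2 (real (r n))) \<longlonglongrightarrow> snd a"
    using tendsto_fst[OF lim] tendsto_snd[OF lim] by (simp_all add: o_def)
  ultimately show ?thesis using a that by (auto simp: mem_Times_iff)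
qed

text \<open>Along an \<open>\<omega>\<close>-limit sequence, the mean value theorem on \<open>[\<tau>\<^sub>n, \<tau>\<^sub>n + 1]\<close> turns \<open>w\<^sub>1' \<rightarrow> 0\<close> into
  \<open>w\<^sub>1''(\<xi>\<^sub>n) \<rightarrow> 0\<close> at points where \<open>(w\<^sub>1, w\<^sub>2)\<close> still tends to the limit point; so the limit is an equilibrium.\<close>

lemma equilibrium\<^sub>1:
  assumes \<tau>: "filterlim \<tau> at_top sequentially"
    and lim\<^sub>1: "(\<lambda>n. w\<^sub>1 (\<tau> n)) \<longlonglongrightarrow> a\<^sub>1" and lim\<^sub>2: "(\<lambda>n. w\<^sub>2 (\<tau> n)) \<longlonglongrightarrow> a\<^sub>2"
  shows "\<sigma> * a\<^sub>1 = \<mu>\<^sub>1 * a\<^sub>1 powr p + \<beta> * a\<^sub>1 powr q * a\<^sub>2 powr (q + 1)"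
proof -
  have "\<forall>n. \<exists>\<xi>. \<tau> n < \<xi> \<and> \<xi> < \<tau> n + 1 \<and> w\<^sub>1' (\<tau> n + 1) - w\<^sub>1' (\<tau> n) = w\<^sub>1'' \<xi>"
    using MVT2[of "\<tau> _" "\<tau> _ + 1" w\<^sub>1' w\<^sub>1''] deriv\<^sub>1' by force
  then obtain \<xi> where \<xi>: "\<And>n. \<tau> n < \<xi> n" "\<And>n. \<xi> n < \<tau> n + 1"
    and mvt: "\<And>n. w\<^sub>1' (\<tau> n + 1) - w\<^sub>1' (\<tau> n) = w\<^sub>1'' (\<xi> n)"
    by metis
  have \<tau>1: "filterlim (\<lambda>n. \<tau> n + 1) at_top sequentially"
    using filterlim_tendsto_add_at_top[OF tendsto_const[of 1] \<tau>] by (simp add: add.commute)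
  have \<xi>_lim: "filterlim \<xi> at_top sequentially"
    using \<tau> by (rule filterlim_at_top_mono) (intro always_eventually allI less_imp_le \<xi>(1))
  note v\<^sub>1 = velocity_tendsto_zero\<^sub>1 and v\<^sub>2 = emden_fowler_system.velocity_tendsto_zero\<^sub>1[OF swap]
  have "(\<lambda>n. w\<^sub>1 (\<xi> n) - w\<^sub>1 (\<tau> n)) \<longlonglongrightarrow> 0" "(\<lambda>n. w\<^sub>2 (\<xi> n) - w\<^sub>2 (\<tau> n)) \<longlonglongrightarrow> 0"
    using \<xi> by (auto intro!: increments_tendsto_zero[OF _ _ \<tau>] deriv\<^sub>1 deriv\<^sub>2 v\<^sub>1 v\<^sub>2 less_imp_le)
  from tendsto_add[OF this(1) lim\<^sub>1] tendsto_add[OF this(2) lim\<^sub>2]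
  have at\<^sub>1: "(\<lambda>n. w\<^sub>1 (\<xi> n)) \<longlonglongrightarrow> a\<^sub>1" and at\<^sub>2: "(\<lambda>n. w\<^sub>2 (\<xi> n)) \<longlonglongrightarrow> a\<^sub>2" by simp_all
  have "(\<lambda>n. w\<^sub>1' (\<tau> n + 1) - w\<^sub>1' (\<tau> n)) \<longlonglongrightarrow> 0 - 0"
    by (intro tendsto_diff filterlim_compose[OF v\<^sub>1 \<tau>1] filterlim_compose[OF v\<^sub>1 \<tau>])
  then have zero: "(\<lambda>n. w\<^sub>1'' (\<xi> n)) \<longlonglongrightarrow> 0" by (simp add: mvt)
  have "0 < p" "0 < q + 1" using p_gt_1 q_pos by simp_all
  then have "(\<lambda>n. w\<^sub>1'' (\<xi> n)) \<longlonglongrightarrow>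
      b * 0 + \<sigma> * a\<^sub>1 - (\<mu>\<^sub>1 * a\<^sub>1 powr p + \<beta> * a\<^sub>1 powr q * a\<^sub>2 powr (q + 1))"
    unfolding ode\<^sub>1 using q_pos
    by (intro tendsto_add tendsto_diff tendsto_mult tendsto_const filterlim_compose[OF v\<^sub>1 \<xi>_lim] at\<^sub>1
        tendsto_powr_of_nonneg[OF at\<^sub>1 nonneg\<^sub>1] tendsto_powr_of_nonneg[OF at\<^sub>2 nonneg\<^sub>2])
  from LIMSEQ_unique[OF zero this] show ?thesis by simp
qed

theorem energy_limit:
  "\<exists>L. (energy \<longlongrightarrow> L) at_top \<and>
     (L = 0 \<or>
      (\<exists>k l. k \<ge> 0 \<and> l \<ge> 0 \<and> (k \<noteq> 0 \<or> l \<noteq> 0) \<and>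
         (k > 0 \<and> l > 0 \<longrightarrow>
            \<mu>\<^sub>1 * k powr (2 * q) + \<beta> * k powr (q - 1) * l powr (q + 1) = 1 \<and>
            \<mu>\<^sub>2 * l powr (2 * q) + \<beta> * l powr (q - 1) * k powr (q + 1) = 1) \<and>
         (k = 0 \<longrightarrow> \<mu>\<^sub>2 * l powr (2 * q) = 1) \<and>
         (l = 0 \<longrightarrow> \<mu>\<^sub>1 * k powr (2 * q) = 1) \<and>
         L = - (p - 1) / (2 * (p + 1)) * (k\<^sup>2 + l\<^sup>2) * \<sigma> powr ((p + 1) / (p - 1))))"
proof -
  obtain L where L: "(energy \<longlongrightarrow> L) at_top" using energy_converges by blast
  obtain \<tau> a\<^sub>1 a\<^sub>2 where \<tau>: "filterlim \<tau> at_top sequentially" and "a\<^sub>1 \<ge> 0" "a\<^sub>2 \<ge> 0"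
    and lim\<^sub>1: "(\<lambda>n. w\<^sub>1 (\<tau> n)) \<longlonglongrightarrow> a\<^sub>1" and lim\<^sub>2: "(\<lambda>n. w\<^sub>2 (\<tau> n)) \<longlonglongrightarrow> a\<^sub>2"
    by (rule omega_limit_point)
  have "0 < p + 1" "0 < q + 1" using p_gt_1 q_pos by simp_all
  note pow\<^sub>1 = tendsto_powr_of_nonneg[OF lim\<^sub>1 nonneg\<^sub>1] and pow\<^sub>2 = tendsto_powr_of_nonneg[OF lim\<^sub>2 nonneg\<^sub>2]
  have "(\<lambda>n. energy (\<tau> n)) \<longlonglongrightarrow> 1/2 * (0\<^sup>2 + 0\<^sup>2 - \<sigma> * (a\<^sub>1\<^sup>2 + a\<^sub>2\<^sup>2)) + 1 / (p + 1) *
      (\<mu>\<^sub>1 * a\<^sub>1 powr (p + 1) + 2 * \<beta> * a\<^sub>1 powr (q + 1) * a\<^sub>2 powr (q + 1) + \<mu>\<^sub>2 * a\<^sub>2 powr (p + 1))"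
    unfolding energy_def
    by (intro tendsto_add tendsto_diff tendsto_mult tendsto_const tendsto_power lim\<^sub>1 lim\<^sub>2
        filterlim_compose[OF velocity_tendsto_zero\<^sub>1 \<tau>] filterlim_compose[OF emden_fowler_system.velocity_tendsto_zero\<^sub>1[OF swap] \<tau>]
        pow\<^sub>1[OF \<open>0 < p + 1\<close>] pow\<^sub>2[OF \<open>0 < p + 1\<close>] pow\<^sub>1[OF \<open>0 < q + 1\<close>] pow\<^sub>2[OF \<open>0 < q + 1\<close>])
  from LIMSEQ_unique[OF filterlim_compose[OF L \<tau>] this]
  have "L = - \<sigma> * (a\<^sub>1\<^sup>2 + a\<^sub>2\<^sup>2) / 2 + 1 / (p + 1) *
      (\<mu>\<^sub>1 * a\<^sub>1 powr (p + 1) + 2 * \<beta> * a\<^sub>1 powr (q + 1) * a\<^sub>2 powr (q + 1) + \<mu>\<^sub>2 * a\<^sub>2 powr (p + 1))"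
    by simp
  then show ?thesis
    using L equilibrium_energy[OF \<sigma>_pos q_pos p_eq \<open>a\<^sub>1 \<ge> 0\<close> \<open>a\<^sub>2 \<ge> 0\<close>
        equilibrium\<^sub>1[OF \<tau> lim\<^sub>1 lim\<^sub>2] emden_fowler_system.equilibrium\<^sub>1[OF swap \<tau> lim\<^sub>2 lim\<^sub>1]]
    by blast
qed

end

section \<open>Radial functions\<close>

lemma norm_add_scaled_axis:
  fixes x :: "real^'n"
  shows "norm (x + t *\<^sub>R axis i 1) = sqrt ((norm x)\<^sup>2 + 2*t*(x$i) + t\<^sup>2)"
proof -
  have e: "(x + t *\<^sub>R axis i 1) \<bullet> (x + t *\<^sub>R axis i 1) = x \<bullet> x + 2*t*(x \<bullet> axis i 1) + t\<^sup>2 * (axis i 1 \<bullet> (axis i (1::real)))"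
    by (simp add: inner_commute algebra_simps power2_eq_square)
  have "x \<bullet> axis i 1 = x $ i" by (simp add: inner_axis)
  moreover have "axis i 1 \<bullet> (axis i (1::real)) = 1" by (simp add: inner_axis_axis)
  moreover have "x \<bullet> x = (norm x)\<^sup>2" by (simp add: power2_norm_eq_inner)
  ultimately have "(x + t *\<^sub>R axis i 1) \<bullet> (x + t *\<^sub>R axis i 1) = (norm x)\<^sup>2 + 2*t*(x$i) + t\<^sup>2"
    using e by simp
  then show ?thesis by (simp add: norm_eq_sqrt_inner)
qed

lemma DERIV_norm_add_scaled_axis:
  fixes x :: "real^'n"
  assumes "x \<noteq> 0"
  shows "DERIV (\<lambda>t. norm (x + t *\<^sub>R axis i 1)) 0 :> x$i / norm x"
proof -
  have pos: "0 < (norm x)\<^sup>2 + 2*0*(x$i) + 0\<^sup>2" using assms by simp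
  have inner: "DERIV (\<lambda>t. (norm x)\<^sup>2 + 2*t*(x$i) + t\<^sup>2) 0 :> 2 * x$i"
    by (rule derivative_eq_intros refl | simp)+
  have "DERIV (\<lambda>t. sqrt ((norm x)\<^sup>2 + 2*t*(x$i) + t\<^sup>2)) 0 :> inverse (sqrt ((norm x)\<^sup>2 + 2*0*(x$i) + 0\<^sup>2)) / 2 * (2 * x$i)"
    by (rule DERIV_chain2[OF DERIV_real_sqrt[OF pos] inner])
  then show ?thesis unfolding norm_add_scaled_axis using assms by (simp add: field_simps)
qed

lemma add_scaled_axis_nonzero:
  fixes x :: "real^'n"
  assumes "x \<noteq> 0" "t \<in> ball 0 (norm x)"
  shows "x + t *\<^sub>R axis i 1 \<noteq> 0"
proof
  assume "x + t *\<^sub>R axis i 1 = 0"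
  then have "x = - (t *\<^sub>R axis i 1)" by (simp add: eq_neg_iff_add_eq_0)
  then have "norm x = \<bar>t\<bar>" by simp
  then show False using assms(2) by simp
qed

lemma DERIV_radial_along_axis:
  fixes u :: "real^'n \<Rightarrow> real" and U U' :: "real \<Rightarrow> real"
  assumes rad: "\<And>y. y \<noteq> 0 \<Longrightarrow> u y = U (norm y)"
    and dU: "DERIV U (norm x) :> U' (norm x)" and x: "x \<noteq> 0"
  shows "DERIV (\<lambda>t. u (x + t *\<^sub>R axis i 1)) 0 :> U' (norm x) * (x$i / norm x)"
proof -
  have dU_at: "DERIV U (norm (x + 0 *\<^sub>R axis i 1)) :> U' (norm x)" using dU by simp
  have D: "DERIV (\<lambda>t. U (norm (x + t *\<^sub>R axis i 1))) 0 :> U' (norm x) * (x$i / norm x)"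
    by (rule DERIV_chain2[OF dU_at DERIV_norm_add_scaled_axis[OF x]])
  show ?thesis
  proof (rule has_field_derivative_transform_within_open[OF D, of "ball 0 (norm x)"])
    show "open (ball (0::real) (norm x))" by simp
    show "(0::real) \<in> ball 0 (norm x)" using x by simp
    fix t :: real assume "t \<in> ball 0 (norm x)"
    then show "U (norm (x + t *\<^sub>R axis i 1)) = u (x + t *\<^sub>R axis i 1)"
      using rad[OF add_scaled_axis_nonzero[OF x, of t i]] by simp
  qed
qed

lemma partial_radial:
  fixes u :: "real^'n \<Rightarrow> real" and U U' :: "real \<Rightarrow> real"
  assumes rad: "\<And>y. y \<noteq> 0 \<Longrightarrow> u y = U (norm y)"
    and dU: "DERIV U (norm x) :> U' (norm x)" and x: "x \<noteq> 0"
  shows "partial i u x = U' (norm x) * (x$i / norm x)"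
  unfolding partial_def by (rule DERIV_imp_deriv[OF DERIV_radial_along_axis[where U'=U' and x=x, OF rad dU x]])

lemma partial_partial_radial:
  fixes u :: "real^'n \<Rightarrow> real" and U U' U'' :: "real \<Rightarrow> real"
  assumes rad: "\<And>y. y \<noteq> 0 \<Longrightarrow> u y = U (norm y)"
    and dU: "\<And>r. r > 0 \<Longrightarrow> DERIV U r :> U' r"
    and dU': "DERIV U' (norm x) :> U'' (norm x)" and x: "x \<noteq> 0"
  shows "partial i (partial i u) x = U'' (norm x) * (x$i / norm x)\<^sup>2 + U' (norm x) * (1 / norm x - (x$i)\<^sup>2 / (norm x)^3)"
proof -
  define N where "N t = norm (x + t *\<^sub>R axis i 1)" for t
  have N0: "N 0 = norm x" unfolding N_def by simp
  have nx: "norm x > 0" using x by simp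
  have dN: "DERIV N 0 :> x$i / norm x" unfolding N_def by (rule DERIV_norm_add_scaled_axis[OF x])
  have dU'_at: "DERIV U' (N 0) :> U'' (norm x)" using dU' N0 by simp
  have c1: "DERIV (\<lambda>t. U' (N t)) 0 :> U'' (norm x) * (x$i / norm x)"
    by (rule DERIV_chain2[OF dU'_at dN])
  have lin: "DERIV (\<lambda>t. x$i + t) 0 :> 0 + 1" by (intro DERIV_add DERIV_const DERIV_ident)
  have c2: "DERIV (\<lambda>t. (x$i + t) / N t) 0 :> ((0 + 1) * N 0 - (x$i + 0) * (x$i / norm x)) / (N 0 * N 0)"
    by (rule DERIV_divide[OF lin dN]) (use N0 nx in simp)
  have D: "DERIV (\<lambda>t. U' (N t) * ((x$i + t) / N t)) 0 :>
      U'' (norm x) * (x$i / norm x) * ((x$i + 0) / N 0) + ((0 + 1) * N 0 - (x$i + 0) * (x$i / norm x)) / (N 0 * N 0) * U' (N 0)"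
    by (rule DERIV_mult[OF c1 c2])
  have D2: "DERIV (\<lambda>t. partial i u (x + t *\<^sub>R axis i 1)) 0 :>
      U'' (norm x) * (x$i / norm x) * ((x$i + 0) / N 0) + ((0 + 1) * N 0 - (x$i + 0) * (x$i / norm x)) / (N 0 * N 0) * U' (N 0)"
  proof (rule has_field_derivative_transform_within_open[OF D, of "ball 0 (norm x)"])
    show "open (ball (0::real) (norm x))" by simp
    show "(0::real) \<in> ball 0 (norm x)" using x by simp
    fix t :: real assume t: "t \<in> ball 0 (norm x)"
    have nz: "x + t *\<^sub>R axis i 1 \<noteq> 0" by (rule add_scaled_axis_nonzero[OF x t])
    have "DERIV U (norm (x + t *\<^sub>R axis i 1)) :> U' (norm (x + t *\<^sub>R axis i 1))"
      using dU nz by simp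
    from partial_radial[where U'=U' and x="x + t *\<^sub>R axis i 1", OF rad this nz, of i]
    show "U' (N t) * ((x$i + t) / N t) = partial i u (x + t *\<^sub>R axis i 1)"
      unfolding N_def by simp
  qed
  have "partial i (partial i u) x =
      U'' (norm x) * (x$i / norm x) * ((x$i + 0) / N 0) + ((0 + 1) * N 0 - (x$i + 0) * (x$i / norm x)) / (N 0 * N 0) * U' (N 0)"
    unfolding partial_def[of i "partial i u"] by (rule DERIV_imp_deriv[OF D2])
  also have "\<dots> = U'' (norm x) * (x$i / norm x)\<^sup>2 + U' (norm x) * (1 / norm x - (x$i)\<^sup>2 / (norm x)^3)"
    unfolding N0 using nx by (simp add: field_simps power2_eq_square power3_eq_cube)
  finally show ?thesis .
qed

lemma laplacian_radial:
  fixes u :: "real^'n \<Rightarrow> real" and U U' U'' :: "real \<Rightarrow> real"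
  assumes rad: "\<And>y. y \<noteq> 0 \<Longrightarrow> u y = U (norm y)"
    and dU: "\<And>r. r > 0 \<Longrightarrow> DERIV U r :> U' r"
    and dU': "\<And>r. r > 0 \<Longrightarrow> DERIV U' r :> U'' r" and x: "x \<noteq> 0"
  shows "laplacian u x = U'' (norm x) + (real CARD('n) - 1) / norm x * U' (norm x)"
proof -
  have nx: "norm x > 0" using x by simp
  have sq: "(\<Sum>i\<in>UNIV. (x$i)\<^sup>2) = (norm x)\<^sup>2"
  proof -
    have "(norm x)\<^sup>2 = x \<bullet> x" by (rule power2_norm_eq_inner)
    also have "\<dots> = (\<Sum>i\<in>UNIV. (x$i)\<^sup>2)" by (simp add: inner_vec_def power2_eq_square)
    finally show ?thesis by simp
  qed
  have "laplacian u x = (\<Sum>i\<in>UNIV. U'' (norm x) * (x$i / norm x)\<^sup>2 + U' (norm x) * (1 / norm x - (x$i)\<^sup>2 / (norm x)^3))"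
    unfolding laplacian_def using partial_partial_radial[where U'=U' and U''=U'' and x=x, OF rad dU dU'[OF nx] x] by simp
  also have "\<dots> = U'' (norm x) * (\<Sum>i\<in>UNIV. (x$i)\<^sup>2) / (norm x)\<^sup>2 + U' (norm x) * (real CARD('n) / norm x - (\<Sum>i\<in>UNIV. (x$i)\<^sup>2) / (norm x)^3)"
    by (simp add: sum.distrib sum_distrib_left sum_subtractf power_divide sum_divide_distrib[symmetric] right_diff_distrib)
  also have "\<dots> = U'' (norm x) + (real CARD('n) - 1) / norm x * U' (norm x)"
    unfolding sq using nx by (simp add: field_simps power2_eq_square power3_eq_cube)
  finally show ?thesis .
qed

lemma DERIV_along_axis:
  fixes g :: "real^'n \<Rightarrow> real"
  assumes "partial_exists i g (r *\<^sub>R axis i 1)"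
  shows "DERIV (\<lambda>s. g (s *\<^sub>R axis i 1)) r :> partial i g (r *\<^sub>R axis i 1)"
proof -
  have fe: "(\<lambda>t. g (r *\<^sub>R axis i 1 + t *\<^sub>R axis i 1)) = (\<lambda>t. g ((t + r) *\<^sub>R axis i 1))"
    by (rule ext) (simp add: scaleR_add_left add.commute)
  have "(\<lambda>t. g ((t + r) *\<^sub>R axis i 1)) differentiable (at 0)"
    using assms unfolding partial_exists_def fe .
  then have "DERIV (\<lambda>t. g ((t + r) *\<^sub>R axis i 1)) 0 :> deriv (\<lambda>t. g ((t + r) *\<^sub>R axis i 1)) 0"
    by (simp add: DERIV_deriv_iff_real_differentiable)
  then have "DERIV (\<lambda>s. g (s *\<^sub>R axis i 1)) (0 + r) :> deriv (\<lambda>t. g ((t + r) *\<^sub>R axis i 1)) 0"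
    by (subst DERIV_shift) simp
  then show ?thesis unfolding partial_def fe by simp
qed

definition unitv_index :: "'n::finite" where
  "unitv_index = (SOME i. True)"

lemma unitv_eq_axis: "(unitv :: real^'n::finite) = axis unitv_index 1"
  unfolding unitv_def unitv_index_def ..

lemma norm_unitv [simp]: "norm (unitv :: real^'n::finite) = 1"
  by (simp add: unitv_eq_axis)

lemma unitv_nonzero [simp]: "(unitv :: real^'n::finite) \<noteq> 0"
  using norm_unitv by (metis norm_zero zero_neq_one)

definition profile :: "(real^'n::finite \<Rightarrow> real) \<Rightarrow> real \<Rightarrow> real" where
  "profile f s = f (s *\<^sub>R unitv)"

lemma radial_eq_profile:
  assumes "radial u" "x \<noteq> 0"
  shows "u x = profile u (norm x)"
proof -
  obtain U where U: "\<And>x. x \<noteq> 0 \<Longrightarrow> u x = U (norm x)" using assms(1) unfolding radial_def by blast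
  show ?thesis using U[OF assms(2)] U[of "norm x *\<^sub>R unitv"] assms(2) by (simp add: profile_def)
qed

lemma DERIV_profile:
  fixes u :: "real^'n \<Rightarrow> real"
  assumes "C2_on (- {0}) u" "r \<noteq> 0"
  shows "DERIV (profile u) r :> profile (partial unitv_index u) r"
    and "DERIV (profile (partial unitv_index u)) r :> profile (partial unitv_index (partial unitv_index u)) r"
proof -
  have "r *\<^sub>R (unitv :: real^'n) \<in> - {0}" using assms(2) by simp
  then have "partial_exists unitv_index u (r *\<^sub>R unitv)"
    "partial_exists unitv_index (partial unitv_index u) (r *\<^sub>R unitv)"
    using assms(1) unfolding C2_on_def by blast+
  then show "DERIV (profile u) r :> profile (partial unitv_index u) r"
    "DERIV (profile (partial unitv_index u)) r :> profile (partial unitv_index (partial unitv_index u)) r"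
    unfolding profile_def[abs_def] unitv_eq_axis by (auto intro: DERIV_along_axis)
qed

lemma laplacian_profile:
  fixes u :: "real^'n \<Rightarrow> real"
  assumes C2: "C2_on (- {0}) u" and rad: "radial u" and "r > 0"
  shows "laplacian u (r *\<^sub>R unitv) = profile (partial unitv_index (partial unitv_index u)) r
           + (real CARD('n) - 1) / r * profile (partial unitv_index u) r"
  using laplacian_radial[OF radial_eq_profile[OF rad] DERIV_profile[OF C2]] \<open>r > 0\<close> by simp

section \<open>The Kelvin and Emden--Fowler transforms\<close>

lemma wbar_eq_profile:
  fixes u :: "real^'n \<Rightarrow> real"
  shows "wbar \<delta> u t = exp ((real CARD('n) - 2 - \<delta>) * t) * profile u (exp t)"
proof -
  have "exp (- t) / (exp (- t))\<^sup>2 = exp t" by (simp add: exp_minus power2_eq_square divide_inverse)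
  then have "wbar \<delta> u t = exp (- \<delta> * t) * exp (- t * (2 - real CARD('n))) * profile u (exp t)"
    by (simp add: wbar_def kelvin_def profile_def exp_powr_real)
  also have "\<dots> = exp ((real CARD('n) - 2 - \<delta>) * t) * profile u (exp t)"
    by (simp add: exp_add[symmetric] algebra_simps)
  finally show ?thesis .
qed

lemma wbar_derivs:
  fixes u :: "real^'n \<Rightarrow> real" and \<delta> :: real
  assumes C2: "C2_on (- {0}) u"
  defines "m \<equiv> real CARD('n) - 2 - \<delta>"
    and "U \<equiv> profile u" and "U' \<equiv> profile (partial unitv_index u)"
    and "U'' \<equiv> profile (partial unitv_index (partial unitv_index u))"
  shows "DERIV (wbar \<delta> u) t :> exp (m * t) * (m * U (exp t) + exp t * U' (exp t))"
    and "DERIV (\<lambda>t. exp (m * t) * (m * U (exp t) + exp t * U' (exp t))) t :>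
           exp (m * t) * (m * (m * U (exp t) + exp t * U' (exp t)) + m * exp t * U' (exp t)
             + exp t * U' (exp t) + (exp t)\<^sup>2 * U'' (exp t))"
proof -
  have U: "DERIV (\<lambda>t. U (exp t)) t :> U' (exp t) * exp t"
    using DERIV_chain2[OF DERIV_profile(1)[OF C2] DERIV_exp] by (simp add: U_def U'_def)
  have U': "DERIV (\<lambda>t. U' (exp t)) t :> U'' (exp t) * exp t"
    using DERIV_chain2[OF DERIV_profile(2)[OF C2] DERIV_exp] by (simp add: U'_def U''_def)
  have "wbar \<delta> u = (\<lambda>t. exp (m * t) * U (exp t))"
    by (rule ext) (simp add: wbar_eq_profile m_def U_def)
  then show "DERIV (wbar \<delta> u) t :> exp (m * t) * (m * U (exp t) + exp t * U' (exp t))"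
    by (auto intro!: derivative_eq_intros U simp: algebra_simps)
  show "DERIV (\<lambda>t. exp (m * t) * (m * U (exp t) + exp t * U' (exp t))) t :>
      exp (m * t) * (m * (m * U (exp t) + exp t * U' (exp t)) + m * exp t * U' (exp t)
        + exp t * U' (exp t) + (exp t)\<^sup>2 * U'' (exp t))"
    by (auto intro!: derivative_eq_intros U U' simp: algebra_simps power2_eq_square)
qed

text \<open>Under \<open>w(t) = e\<^sup>m\<^sup>t U(e\<^sup>t)\<close>, the nonlinearity scales by \<open>e\<^sup>m\<^sup>t\<^sup>p = e\<^sup>m\<^sup>t e\<^sup>2\<^sup>t\<close> because \<open>m (p - 1) = 2\<close>,
  exactly like the second-order terms; this is why the transformed system is autonomous.\<close>

lemma emden_fowler_identity:
  fixes m N \<sigma> b p q \<mu> \<beta> U U' U'' V t :: real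
  assumes mp: "m * (p - 1) = 2" and p: "p = 2 * q + 1" and b: "b = 2 * m - (N - 2)" and \<sigma>: "\<sigma> = m * (N - 2 - m)"
    and U'': "U'' = - ((N - 1) / exp t * U') - (\<mu> * U powr p + \<beta> * U powr q * V powr (q+1))"
  shows "exp (m * t) * (m * (m * U + exp t * U') + m * exp t * U' + exp t * U' + (exp t)\<^sup>2 * U'')
    = b * (exp (m * t) * (m * U + exp t * U')) + \<sigma> * (exp (m * t) * U)
      - (\<mu> * (exp (m * t) * U) powr p + \<beta> * (exp (m * t) * U) powr q * (exp (m * t) * V) powr (q+1))"
proof -
  have E: "exp (m * t) powr p = exp (m * t) * (exp t)\<^sup>2"
  proof -
    have "m * p = m + 2" using mp by (simp add: algebra_simps)
    then have "m * t * p = m * t + 2 * t" by (metis distrib_right mult.commute mult.left_commute)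
    then show ?thesis by (simp add: exp_powr_real exp_add exp_double)
  qed
  have E2: "exp (m * t) powr q * exp (m * t) powr (q+1) = exp (m * t) powr p"
    using p by (simp add: powr_add[symmetric])
  have f: "\<mu> * (exp (m * t) * U) powr p + \<beta> * (exp (m * t) * U) powr q * (exp (m * t) * V) powr (q+1)
      = exp (m * t) * (exp t)\<^sup>2 * (\<mu> * U powr p + \<beta> * U powr q * V powr (q+1))"
  proof -
    have "\<mu> * (exp (m * t) * U) powr p + \<beta> * (exp (m * t) * U) powr q * (exp (m * t) * V) powr (q+1)
      = exp (m * t) powr p * (\<mu> * U powr p) + (exp (m * t) powr q * exp (m * t) powr (q+1)) * (\<beta> * U powr q * V powr (q+1))"
      by (simp add: powr_mult algebra_simps)
    then show ?thesis unfolding E2 E by (simp add: algebra_simps)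
  qed
  have et: "exp t > 0" by simp
  show ?thesis unfolding f U'' b \<sigma> using et
    by (simp add: field_simps power2_eq_square)
qed

lemma wbar_ode:
  fixes u v :: "real^'n \<Rightarrow> real" and \<mu> \<beta> p q m :: real
  defines "n \<equiv> real CARD('n)"
  defines "w \<equiv> wbar (n - 2 - m) u" and "w\<^sub>v \<equiv> wbar (n - 2 - m) v"
  assumes C2: "C2_on (- {0}) u" and rad: "radial u" and m: "m * (p - 1) = 2" and p: "p = 2 * q + 1"
    and eq: "\<forall>x. x \<noteq> 0 \<longrightarrow>
       - laplacian u x = \<mu> * u x powr (2 * q + 1) + \<beta> * u x powr q * v x powr (q + 1)"
  shows "DERIV w t :> deriv w t" and "DERIV (deriv w) t :> deriv (deriv w) t"
    and "deriv (deriv w) t = (2 * m - (n - 2)) * deriv w t + m * (n - 2 - m) * w t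
           - (\<mu> * w t powr p + \<beta> * w t powr q * w\<^sub>v t powr (q + 1))"
proof -
  define U U' U'' where "U = profile u" and "U' = profile (partial unitv_index u)"
    and "U'' = profile (partial unitv_index (partial unitv_index u))"
  define W' where "W' t = exp (m * t) * (m * U (exp t) + exp t * U' (exp t))" for t
  define W'' where "W'' t = exp (m * t) * (m * (m * U (exp t) + exp t * U' (exp t)) + m * exp t * U' (exp t)
    + exp t * U' (exp t) + (exp t)\<^sup>2 * U'' (exp t))" for t
  have m_eq: "n - 2 - (n - 2 - m) = m" by simp
  have W': "DERIV w t :> W' t" for t
    using wbar_derivs(1)[OF C2, of "n - 2 - m"] by (simp add: w_def W'_def U_def U'_def m_eq flip: n_def)
  have W'': "DERIV W' t :> W'' t" for t
    using wbar_derivs(2)[OF C2, of "n - 2 - m"]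
    by (simp add: W'_def[abs_def] W''_def U_def U'_def U''_def m_eq flip: n_def)
  have "deriv w = W'" using W' by (intro ext DERIV_imp_deriv)
  moreover have "deriv W' = W''" using W'' by (intro ext DERIV_imp_deriv)
  ultimately show "DERIV w t :> deriv w t" "DERIV (deriv w) t :> deriv (deriv w) t"
    using W' W'' by simp_all
  have "laplacian u (exp t *\<^sub>R unitv) = U'' (exp t) + (n - 1) / exp t * U' (exp t)"
    using laplacian_profile[OF C2 rad, of "exp t"] by (simp add: U'_def U''_def n_def)
  moreover have "- laplacian u (exp t *\<^sub>R unitv)
      = \<mu> * U (exp t) powr p + \<beta> * U (exp t) powr q * profile v (exp t) powr (q + 1)"
    using eq by (simp add: U_def profile_def p)
  ultimately have "U'' (exp t) = - ((n - 1) / exp t * U' (exp t))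
      - (\<mu> * U (exp t) powr p + \<beta> * U (exp t) powr q * profile v (exp t) powr (q + 1))"
    by linarith
  from emden_fowler_identity[OF m p refl refl this]
  show "deriv (deriv w) t = (2 * m - (n - 2)) * deriv w t + m * (n - 2 - m) * w t
      - (\<mu> * w t powr p + \<beta> * w t powr q * w\<^sub>v t powr (q + 1))"
    using \<open>deriv w = W'\<close> \<open>deriv W' = W''\<close>
    by (simp add: W'_def W''_def w_def w\<^sub>v_def wbar_eq_profile U_def m_eq flip: n_def)
qed

lemma emden_fowler_exponents:
  fixes n p :: real
  assumes "n \<ge> 3" "n / (n - 2) < p" "p < (n + 2) / (n - 2)"
  defines "\<alpha> \<equiv> p * (n - 2) - (n + 2)" and "m \<equiv> 2 / (p - 1)"
  shows "p > 1" "m * (p - 1) = 2" "2 * m - (n - 2) > 0" "m * (n - 2 - m) > 0"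
    and "(2 + \<alpha>) / (p - 1) = n - 2 - m"
    and "(2 + \<alpha>) * (n - 2) / (p - 1)\<^sup>2 * (p - (n + \<alpha>) / (n - 2)) = m * (n - 2 - m)"
proof -
  have "n - 2 > 0" using assms(1) by simp
  then have lo: "n < p * (n - 2)" and hi: "p * (n - 2) < n + 2"
    using assms(2,3) by (simp_all add: divide_less_eq less_divide_eq)
  then have "1 * (n - 2) < p * (n - 2)" by simp
  then show "p > 1" using \<open>n - 2 > 0\<close> by (simp only: mult_less_cancel_right)
  then show "m * (p - 1) = 2" by (simp add: m_def field_simps)
  have "(n - 2) * (p - 1) < 4" using hi by (simp add: algebra_simps)
  then show "2 * m - (n - 2) > 0" using \<open>p > 1\<close> by (simp add: m_def less_divide_eq)
  have "2 < (n - 2) * (p - 1)" using lo by (simp add: algebra_simps)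
  then have "m < n - 2" using \<open>p > 1\<close> by (simp add: m_def divide_less_eq)
  moreover have "m > 0" using \<open>p > 1\<close> by (simp add: m_def)
  ultimately show "m * (n - 2 - m) > 0" by simp
  show \<delta>: "(2 + \<alpha>) / (p - 1) = n - 2 - m"
    using \<open>p > 1\<close> by (simp add: \<alpha>_def m_def field_simps)
  have "p - (n + \<alpha>) / (n - 2) = 2 / (n - 2)" using \<open>n - 2 > 0\<close> by (simp add: \<alpha>_def field_simps)
  then have "(2 + \<alpha>) * (n - 2) / (p - 1)\<^sup>2 * (p - (n + \<alpha>) / (n - 2))
      = (2 + \<alpha>) * (n - 2) / (p - 1)\<^sup>2 * (2 / (n - 2))" by simp
  also have "\<dots> = 2 * (2 + \<alpha>) / (p - 1)\<^sup>2" using \<open>n - 2 > 0\<close> by simp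
  also have "\<dots> = m * ((2 + \<alpha>) / (p - 1))"
    using \<open>p > 1\<close> by (simp add: m_def power2_eq_square)
  finally show "(2 + \<alpha>) * (n - 2) / (p - 1)\<^sup>2 * (p - (n + \<alpha>) / (n - 2)) = m * (n - 2 - m)"
    unfolding \<delta> .
qed

lemma wbar_emden_fowler_system:
  fixes u v :: "real^'n \<Rightarrow> real" and p q \<mu>\<^sub>1 \<mu>\<^sub>2 \<beta> m :: real
  defines "n \<equiv> real CARD('n)"
  defines "w\<^sub>1 \<equiv> wbar (n - 2 - m) u" and "w\<^sub>2 \<equiv> wbar (n - 2 - m) v"
  assumes "\<mu>\<^sub>1 > 0" "\<mu>\<^sub>2 > 0" "\<beta> > 0" "q > 0" and p: "p = 2 * q + 1" and m: "m * (p - 1) = 2"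
    and "2 * m - (n - 2) > 0" "m * (n - 2 - m) > 0"
    and C2: "C2_on (- {0}) u" "C2_on (- {0}) v" and rad: "radial u" "radial v"
    and nonneg: "\<forall>x. x \<noteq> 0 \<longrightarrow> u x \<ge> 0 \<and> v x \<ge> 0"
    and eq\<^sub>1: "\<forall>x. x \<noteq> 0 \<longrightarrow>
       - laplacian u x = \<mu>\<^sub>1 * u x powr (2 * q + 1) + \<beta> * u x powr q * v x powr (q + 1)"
    and eq\<^sub>2: "\<forall>x. x \<noteq> 0 \<longrightarrow>
       - laplacian v x = \<mu>\<^sub>2 * v x powr (2 * q + 1) + \<beta> * v x powr q * u x powr (q + 1)"
  shows "emden_fowler_system (2 * m - (n - 2)) (m * (n - 2 - m)) \<mu>\<^sub>1 \<mu>\<^sub>2 \<beta> p q w\<^sub>1 w\<^sub>2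
           (deriv w\<^sub>1) (deriv w\<^sub>2) (deriv (deriv w\<^sub>1)) (deriv (deriv w\<^sub>2))"
proof
  note ode\<^sub>1 = wbar_ode[OF C2(1) rad(1) m p eq\<^sub>1] and ode\<^sub>2 = wbar_ode[OF C2(2) rad(2) m p eq\<^sub>2]
  fix t
  show "DERIV w\<^sub>1 t :> deriv w\<^sub>1 t" "DERIV w\<^sub>2 t :> deriv w\<^sub>2 t"
    "DERIV (deriv w\<^sub>1) t :> deriv (deriv w\<^sub>1) t" "DERIV (deriv w\<^sub>2) t :> deriv (deriv w\<^sub>2) t"
    using ode\<^sub>1(1,2) ode\<^sub>2(1,2) by (simp_all add: w\<^sub>1_def w\<^sub>2_def n_def)
  show "deriv (deriv w\<^sub>1) t = (2 * m - (n - 2)) * deriv w\<^sub>1 t + m * (n - 2 - m) * w\<^sub>1 t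
      - (\<mu>\<^sub>1 * w\<^sub>1 t powr p + \<beta> * w\<^sub>1 t powr q * w\<^sub>2 t powr (q + 1))"
    "deriv (deriv w\<^sub>2) t = (2 * m - (n - 2)) * deriv w\<^sub>2 t + m * (n - 2 - m) * w\<^sub>2 t
      - (\<mu>\<^sub>2 * w\<^sub>2 t powr p + \<beta> * w\<^sub>2 t powr q * w\<^sub>1 t powr (q + 1))"
    using ode\<^sub>1(3) ode\<^sub>2(3) by (simp_all add: w\<^sub>1_def w\<^sub>2_def n_def)
  show "w\<^sub>1 t \<ge> 0" "w\<^sub>2 t \<ge> 0"
    using nonneg by (simp_all add: w\<^sub>1_def w\<^sub>2_def wbar_eq_profile profile_def)
qed (use assms in auto)

theorem lemma4p6:
  fixes u v :: "real^'n \<Rightarrow> real"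
    and p q \<mu>\<^sub>1 \<mu>\<^sub>2 \<beta> :: real
  defines "n \<equiv> real CARD('n)"
  defines "\<alpha> \<equiv> p * (n - 2) - (n + 2)"
  defines "\<delta>\<^sub>0 \<equiv> (2 + \<alpha>) / (p - 1)"
  defines "\<sigma>\<^sub>0 \<equiv> (2 + \<alpha>) * (n - 2) / (p - 1)\<^sup>2 * (p - (n + \<alpha>) / (n - 2))"
  defines "w\<^sub>1 \<equiv> wbar \<delta>\<^sub>0 u"
  defines "w\<^sub>2 \<equiv> wbar \<delta>\<^sub>0 v"
  defines "\<Psi> \<equiv> (\<lambda>t. 1/2 * ((deriv w\<^sub>1 t)\<^sup>2 + (deriv w\<^sub>2 t)\<^sup>2 - \<sigma>\<^sub>0 * ((w\<^sub>1 t)\<^sup>2 + (w\<^sub>2 t)\<^sup>2))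
              + 1 / (p + 1) * (\<mu>\<^sub>1 * w\<^sub>1 t powr (p + 1) + 2 * \<beta> * w\<^sub>1 t powr (q + 1) * w\<^sub>2 t powr (q + 1)
                               + \<mu>\<^sub>2 * w\<^sub>2 t powr (p + 1)))"
  assumes n3: "CARD('n) \<ge> 3"
    and pos: "\<mu>\<^sub>1 > 0" "\<mu>\<^sub>2 > 0" "\<beta> > 0"
    and pq: "p = 2 * q + 1"
    and prange: "n / (n - 2) < p" "p < (n + 2) / (n - 2)"
    and C2: "C2_on (- {0}) u" "C2_on (- {0}) v"
    and rad: "radial u" "radial v"
    and nonneg: "\<forall>x. x \<noteq> 0 \<longrightarrow> u x \<ge> 0 \<and> v x \<ge> 0"
    and eq1: "\<forall>x. x \<noteq> 0 \<longrightarrow>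
       - laplacian u x = \<mu>\<^sub>1 * u x powr (2 * q + 1) + \<beta> * u x powr q * v x powr (q + 1)"
    and eq2: "\<forall>x. x \<noteq> 0 \<longrightarrow>
       - laplacian v x = \<mu>\<^sub>2 * v x powr (2 * q + 1) + \<beta> * v x powr q * u x powr (q + 1)"
  shows "\<exists>L. (\<Psi> \<longlongrightarrow> L) at_top \<and>
           (L = 0 \<or>
            (\<exists>k l. k \<ge> 0 \<and> l \<ge> 0 \<and> (k \<noteq> 0 \<or> l \<noteq> 0) \<and>
               (k > 0 \<and> l > 0 \<longrightarrow>
                  \<mu>\<^sub>1 * k powr (2 * q) + \<beta> * k powr (q - 1) * l powr (q + 1) = 1 \<and>
                  \<mu>\<^sub>2 * l powr (2 * q) + \<beta> * l powr (q - 1) * k powr (q + 1) = 1) \<and>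
               (k = 0 \<longrightarrow> \<mu>\<^sub>2 * l powr (2 * q) = 1) \<and>
               (l = 0 \<longrightarrow> \<mu>\<^sub>1 * k powr (2 * q) = 1) \<and>
               L = - (p - 1) / (2 * (p + 1)) * (k\<^sup>2 + l\<^sup>2) * \<sigma>\<^sub>0 powr ((p + 1) / (p - 1))))"
proof -
  define m where "m = 2 / (p - 1)"
  have "n \<ge> 3" using n3 by (simp add: n_def)
  note exponents = emden_fowler_exponents[OF this prange, folded \<alpha>_def m_def]
  have "q > 0" using exponents(1) pq by simp
  have "\<delta>\<^sub>0 = n - 2 - m" "\<sigma>\<^sub>0 = m * (n - 2 - m)"
    using exponents(5,6) by (simp_all add: \<delta>\<^sub>0_def \<sigma>\<^sub>0_def)
  then interpret emden_fowler_system "2 * m - (n - 2)" \<sigma>\<^sub>0 \<mu>\<^sub>1 \<mu>\<^sub>2 \<beta> p q w\<^sub>1 w\<^sub>2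
      "deriv w\<^sub>1" "deriv w\<^sub>2" "deriv (deriv w\<^sub>1)" "deriv (deriv w\<^sub>2)"
    unfolding w\<^sub>1_def w\<^sub>2_def n_def
    using wbar_emden_fowler_system[OF pos \<open>q > 0\<close> pq exponents(2,3,4)[unfolded n_def] C2 rad nonneg eq1 eq2]
    by simp
  have "\<Psi> = energy" by (simp add: \<Psi>_def energy_def[abs_def])
  then show ?thesis using energy_limit by simp
qed

end
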